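(* Let $\lambda>0$, $\ell>0$ and let $n\ge n_{\lambda,\ell}$ be an integer. Then $\mathcal{E}_\lambda[\gamma_{\rm larc}^{\lambda,\ell,n}]\le\mathcal{E}_\lambda[\gamma_{\rm sarc}^{\lambda,\ell,n}]$, with equality if and only if $\lambda\ell^2=m^2\hat\lambda$ for some $m\in\mathbb{N}$ and $n=n_{\lambda,\ell}$.
   Context: Elliptic functions: for $q\in[0,1)$, $x\in\mathbb{R}$, $\mathrm{F}(x,q)=\int_0^x(1-q^2\sin^2\theta)^{-1/2}\,d\theta$, $\mathrm{E}(x,q)=\int_0^x(1-q^2\sin^2\theta)^{1/2}\,d\theta$, $\mathrm{K}(q)=\mathrm{F}(\pi/2,q)$, $\mathrm{E}(q)=\mathrm{E}(\pi/2,q)$; $\mathrm{am}(\cdot,q)$ is the inverse of $x\mapsto\mathrm{F}(x,q)$, $\mathrm{cn}(x,q)=\cos\mathrm{am}(x,q)$. The function $q\mapsto2\mathrm{E}(q)-\mathrm{K}(q)$ is strictly decreasing on $[0,1)$ with unique zero $q_*\in(0,1)$. On $[1/\sqrt2,1)$ let $f(q)=(4q^4-5q^2+1)\mathrm{K}(q)+(-8q^4+8q^2-1)\mathrm{E}(q)$ and $g(q)=8(2\mathrm{E}(q)-\mathrm{K}(q))^2(2q^2-1)$. $f$ has a unique zero $\hat q\in[1/\sqrt2,1)$; $\hat\lambda:=g(\hat q)\approx0.70107$. $g(1/\sqrt2)=0$, $g$ strictly increasing on $[1/\sqrt2,\hat q]$, strictly decreasing on $[\hat q,q_*]$. For $c\in(0,\hat\lambda]$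 let $q_1(c)\in(1/\sqrt2,\hat q]$, $q_2(c)\in[\hat q,q_* )$ solve $g(q)=c$ ($q_1(\hat\lambda)=q_2(\hat\lambda)=\hat q$). $n_{\lambda,\ell}=\lceil\sqrt{\lambda\ell^2/\hat\lambda}\rceil$. $\mathcal{E}_\lambda[\gamma]=\int_\gamma k^2\,ds+\lambda L[\gamma]$ ($k$ signed curvature, $s$ arclength, $L$ length). Curves (arclength parametrized on $[0,2n\mathrm{K}(q)/\alpha]$): for $n\ge n_{\lambda,\ell}$, $\gamma_{\rm sarc}^{\lambda,\ell,n}(s)=\frac1\alpha\big(2\mathrm{E}(\mathrm{am}(\alpha s-\mathrm{K}(q),q),q)+2\mathrm{E}(q)-\alpha s,\ 2q\,\mathrm{cn}(\alpha s-\mathrm{K}(q),q)\big)$ with $q=q_1(\lambda\ell^2/n^2)$, $\alpha=\frac{2n}{\ell}(2\mathrm{E}(q)-\mathrm{K}(q))$; $\gamma_{\rm larc}^{\lambda,\ell,n}$ is the same formula with $q=q_2(\lambda\ell^2/n^2)$. *)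

theory Defs
  imports "HOL-Analysis.Analysis"
begin

definition oint :: "(real \<Rightarrow> real) \<Rightarrow> real \<Rightarrow> real \<Rightarrow> real" where
  "oint f a b = (if a \<le> b then integral {a..b} f else - integral {b..a} f)"

definition ellF :: "real \<Rightarrow> real \<Rightarrow> real" where
  "ellF x q = oint (\<lambda>\<theta>. 1 / sqrt (1 - q\<^sup>2 * (sin \<theta>)\<^sup>2)) 0 x"

definition ellE :: "real \<Rightarrow> real \<Rightarrow> real" where
  "ellE x q = oint (\<lambda>\<theta>. sqrt (1 - q\<^sup>2 * (sin \<theta>)\<^sup>2)) 0 x"

definition ellK :: "real \<Rightarrow> real" where
  "ellK q = ellF (pi / 2) q"

definition ellEc :: "real \<Rightarrow> real" where
  "ellEc q = ellE (pi / 2) q"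

definition am :: "real \<Rightarrow> real \<Rightarrow> real" where
  "am x q = (THE y. ellF y q = x)"

definition cn :: "real \<Rightarrow> real \<Rightarrow> real" where
  "cn x q = cos (am x q)"

definition q_star :: real where
  "q_star = (THE q. 0 < q \<and> q < 1 \<and> 2 * ellEc q - ellK q = 0)"

definition f_aux :: "real \<Rightarrow> real" where
  "f_aux q = (4*q^4 - 5*q\<^sup>2 + 1) * ellK q + (-8*q^4 + 8*q\<^sup>2 - 1) * ellEc q"

definition g_aux :: "real \<Rightarrow> real" where
  "g_aux q = 8 * (2 * ellEc q - ellK q)\<^sup>2 * (2*q\<^sup>2 - 1)"

definition q_hat :: real where
  "q_hat = (THE q. 1 / sqrt 2 \<le> q \<and> q < 1 \<and> f_aux q = 0)"

definition lambda_hat :: real where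
  "lambda_hat = g_aux q_hat"

definition q1 :: "real \<Rightarrow> real" where
  "q1 c = (THE q. 1 / sqrt 2 < q \<and> q \<le> q_hat \<and> g_aux q = c)"

definition q2 :: "real \<Rightarrow> real" where
  "q2 c = (THE q. q_hat \<le> q \<and> q < q_star \<and> g_aux q = c)"

definition n_lam :: "real \<Rightarrow> real \<Rightarrow> int" where
  "n_lam lam l = \<lceil>sqrt (lam * l\<^sup>2 / lambda_hat)\<rceil>"

definition alpha_of :: "real \<Rightarrow> nat \<Rightarrow> real \<Rightarrow> real" where
  "alpha_of l n q = 2 * real n / l * (2 * ellEc q - ellK q)"

definition arc_curve :: "real \<Rightarrow> nat \<Rightarrow> real \<Rightarrow> real \<Rightarrow> real \<times> real" where
  "arc_curve l n q s = (let \<alpha> = alpha_of l n q in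
     ((2 * ellE (am (\<alpha> * s - ellK q) q) q + 2 * ellEc q - \<alpha> * s) / \<alpha>,
      2 * q * cn (\<alpha> * s - ellK q) q / \<alpha>))"

definition arc_end :: "real \<Rightarrow> nat \<Rightarrow> real \<Rightarrow> real" where
  "arc_end l n q = 2 * real n * ellK q / alpha_of l n q"

definition gamma_sarc :: "real \<Rightarrow> real \<Rightarrow> nat \<Rightarrow> real \<Rightarrow> real \<times> real" where
  "gamma_sarc lam l n = arc_curve l n (q1 (lam * l\<^sup>2 / (real n)\<^sup>2))"

definition gamma_larc :: "real \<Rightarrow> real \<Rightarrow> nat \<Rightarrow> real \<Rightarrow> real \<times> real" where
  "gamma_larc lam l n = arc_curve l n (q2 (lam * l\<^sup>2 / (real n)\<^sup>2))"

definition sarc_end :: "real \<Rightarrow> real \<Rightarrow> nat \<Rightarrow> real" where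
  "sarc_end lam l n = arc_end l n (q1 (lam * l\<^sup>2 / (real n)\<^sup>2))"

definition larc_end :: "real \<Rightarrow> real \<Rightarrow> nat \<Rightarrow> real" where
  "larc_end lam l n = arc_end l n (q2 (lam * l\<^sup>2 / (real n)\<^sup>2))"

definition speed :: "(real \<Rightarrow> real \<times> real) \<Rightarrow> real \<Rightarrow> real" where
  "speed \<gamma> t = sqrt ((deriv (\<lambda>u. fst (\<gamma> u)) t)\<^sup>2 + (deriv (\<lambda>u. snd (\<gamma> u)) t)\<^sup>2)"

definition signed_curvature :: "(real \<Rightarrow> real \<times> real) \<Rightarrow> real \<Rightarrow> real" where
  "signed_curvature \<gamma> t =
     (deriv (\<lambda>u. fst (\<gamma> u)) t * deriv (deriv (\<lambda>u. snd (\<gamma> u))) t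
      - deriv (\<lambda>u. snd (\<gamma> u)) t * deriv (deriv (\<lambda>u. fst (\<gamma> u))) t) / (speed \<gamma> t) ^ 3"

definition curve_length :: "(real \<Rightarrow> real \<times> real) \<Rightarrow> real \<Rightarrow> real \<Rightarrow> real" where
  "curve_length \<gamma> a b = integral {a..b} (speed \<gamma>)"

definition energy :: "real \<Rightarrow> (real \<Rightarrow> real \<times> real) \<Rightarrow> real \<Rightarrow> real \<Rightarrow> real" where
  "energy lam \<gamma> a b =
     integral {a..b} (\<lambda>t. (signed_curvature \<gamma> t)\<^sup>2 * speed \<gamma> t) + lam * curve_length \<gamma> a b"

end

theory Submission
  imports Defs
begin

(*
  Both curves belong to one family.  For 0 < q < q_star the curve arc_curve l n q has unit speed
  and signed curvature -2 q alpha cn, so with c = lam l^2 / n^2 its energy is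
  (n^2 / l) * reduced_energy c q, where reduced_energy c q = 16 D (E - (1 - q^2) K) + c K / D
  and D = 2E - K.  Legendre's formulas for dK/dq and dE/dq give

    d/dq reduced_energy c q
      = 2 ((E - (1 - q^2) K)^2 + q^2 (1 - q^2) K^2) (c - g q) / (q (1 - q^2) D^2),

  so reduced_energy c decreases exactly where g > c.  The function g increases on
  [1/sqrt 2, q_hat] and decreases on [q_hat, q_star], hence g > c strictly between its two
  level points q1 c <= q_hat <= q2 c.  Therefore the large arc never has more energy than the
  small one, with equality iff q1 c = q2 c, i.e. c = lambda_hat, i.e. lam l^2 = n^2 lambda_hat
  and n = n_lam lam l.  The shape of g comes from g' = 16 D f / (q (1 - q^2)) together with
  the observation that f' < 0 at every zero of f in [1/sqrt 2, 1), so that f changes sign only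
  once there, at q_hat.
*)

section \<open>Calculus on the real line\<close>

lemma has_integral_of_real_derivative:
  fixes F F' :: "real \<Rightarrow> real"
  assumes "a \<le> b" and "\<And>x. a \<le> x \<Longrightarrow> x \<le> b \<Longrightarrow> (F has_real_derivative F' x) (at x)"
  shows "(F' has_integral (F b - F a)) {a..b}"
  using assms
  by (intro fundamental_theorem_of_calculus)
     (auto simp: has_real_derivative_iff_has_vector_derivative intro: has_vector_derivative_at_within)

lemma has_real_derivative_integral_parametric:
  fixes f fx :: "real \<Rightarrow> real \<Rightarrow> real"
  assumes U: "open U" "convex U" "x \<in> U"
    and deriv: "\<And>x t. x \<in> U \<Longrightarrow> ((\<lambda>x. f x t) has_real_derivative fx x t) (at x)"
    and integrable: "\<And>x. x \<in> U \<Longrightarrow> f x integrable_on {a..b}"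
    and cont: "continuous_on (U \<times> {a..b}) (\<lambda>(x, t). fx x t)"
  shows "((\<lambda>x. integral {a..b} (f x)) has_real_derivative integral {a..b} (fx x)) (at x)"
proof -
  have "((\<lambda>x. integral (cbox a b) (f x)) has_real_derivative integral (cbox a b) (fx x)) (at x within U)"
    using U deriv integrable cont
    by (intro leibniz_rule_field_derivative) (auto simp: has_field_derivative_at_within)
  then show ?thesis
    using at_within_open[OF U(3,1)] by simp
qed

lemma strict_mono_on_if_deriv_pos:
  fixes f f' :: "real \<Rightarrow> real"
  assumes S: "connected S"
    and deriv: "\<And>x. x \<in> S \<Longrightarrow> (f has_real_derivative f' x) (at x)"
    and pos: "\<And>x. x \<in> interior S \<Longrightarrow> 0 < f' x"
  shows "strict_mono_on S f"
proof (rule strict_mono_onI)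
  fix x y assume xy: "x \<in> S" "y \<in> S" "x < y"
  have Icc: "{x..y} \<subseteq> S" by (rule connected_contains_Icc[OF S xy(1,2)])
  have interior: "{x<..<y} \<subseteq> interior S"
    by (rule interior_maximal) (use Icc in auto)
  show "f x < f y"
  proof (rule DERIV_pos_imp_increasing_open[OF xy(3)])
    fix t assume "x < t" "t < y"
    then have "t \<in> S" "t \<in> interior S"
      using Icc interior by auto
    then show "\<exists>d. (f has_real_derivative d) (at t) \<and> 0 < d"
      using deriv pos by blast
  next
    show "continuous_on {x..y} f"
      by (rule DERIV_continuous_on[where D=f'], rule has_field_derivative_at_within) (use Icc deriv in auto)
  qed
qed

lemma strict_antimono_on_if_deriv_neg:
  fixes f f' :: "real \<Rightarrow> real"
  assumes S: "connected S"
    and deriv: "\<And>x. x \<in> S \<Longrightarrow> (f has_real_derivative f' x) (at x)"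
    and neg: "\<And>x. x \<in> interior S \<Longrightarrow> f' x < 0"
  shows "strict_antimono_on S f"
proof -
  have "strict_mono_on S (\<lambda>x. - f x)"
    using S by (rule strict_mono_on_if_deriv_pos) (use deriv neg in \<open>auto intro: DERIV_minus\<close>)
  then show ?thesis
    by (auto simp: monotone_on_def)
qed

lemma first_zero_after_neg:
  fixes F :: "real \<Rightarrow> real"
  assumes cont: "continuous_on {a..b} F" and "a \<le> b" "F a < 0" "0 \<le> F b"
  obtains w where "a < w" "w \<le> b" "F w = 0" "\<And>t. a \<le> t \<Longrightarrow> t < w \<Longrightarrow> F t < 0"
proof -
  define Z where "Z = {t \<in> {a..b}. F t = 0}"
  have "closed Z"
    unfolding Z_def by (rule continuous_closed_preimage_constant[OF cont]) simp
  moreover have "Z \<noteq> {}"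
    using IVT'[of F a 0 b] assms by (auto simp: Z_def)
  moreover have "bdd_below Z"
    by (rule bdd_belowI[of _ a]) (simp add: Z_def)
  ultimately have "Inf Z \<in> Z"
    by (rule closed_contains_Inf[rotated -1])
  then have w: "a \<le> Inf Z" "Inf Z \<le> b" "F (Inf Z) = 0"
    by (auto simp: Z_def)
  have neg: "F t < 0" if t: "a \<le> t" "t < Inf Z" for t
  proof (rule ccontr)
    assume "\<not> F t < 0"
    then obtain u where "a \<le> u" "u \<le> t" "F u = 0"
      using IVT'[of F a 0 t] assms t w continuous_on_subset[OF cont, of "{a..t}"] by auto
    then have "u \<in> Z"
      using t w by (auto simp: Z_def)
    then have "Inf Z \<le> u"
      using \<open>bdd_below Z\<close> by (rule cInf_lower)
    then show False
      using \<open>u \<le> t\<close> t by linarith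
  qed
  have "a \<noteq> Inf Z"
    using w \<open>F a < 0\<close> by auto
  with w neg show thesis
    by (intro that[of "Inf Z"]) auto
qed

lemma neg_after_zero_if_deriv_neg_at_zeros:
  fixes F F' :: "real \<Rightarrow> real"
  assumes deriv: "\<And>x. x \<in> {a..b} \<Longrightarrow> (F has_real_derivative F' x) (at x)"
    and at_zeros: "\<And>x. x \<in> {a..b} \<Longrightarrow> F x = 0 \<Longrightarrow> F' x < 0"
    and "F a = 0" "a < b"
  shows "F b < 0"
proof (rule ccontr)
  assume "\<not> F b < 0"
  have cont: "continuous_on {a..b} F"
    by (rule DERIV_continuous_on[where D=F'], rule has_field_derivative_at_within, rule deriv)
  have "a \<in> {a..b}"
    using \<open>a < b\<close> by simp
  from DERIV_neg_dec_right[OF deriv[OF this] at_zeros[OF this \<open>F a = 0\<close>]]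
  obtain d where d: "0 < d" "\<And>h. 0 < h \<Longrightarrow> h < d \<Longrightarrow> F (a + h) < 0"
    using \<open>F a = 0\<close> by auto
  define s where "s = a + min (d/2) (b - a)"
  have "F s < 0" "a < s" "s \<le> b"
    using d(2)[of "min (d/2) (b - a)"] d(1) \<open>a < b\<close> by (auto simp: s_def)
  with first_zero_after_neg[OF continuous_on_subset[OF cont, of "{s..b}"]] \<open>\<not> F b < 0\<close>
  obtain w where w: "s < w" "w \<le> b" "F w = 0" "\<And>t. s \<le> t \<Longrightarrow> t < w \<Longrightarrow> F t < 0"
    by auto
  then have "w \<in> {a..b}"
    using \<open>a < s\<close> by auto
  from DERIV_neg_dec_left[OF deriv[OF this] at_zeros[OF this \<open>F w = 0\<close>]]
  obtain e where e: "0 < e" "\<And>h. 0 < h \<Longrightarrow> h < e \<Longrightarrow> 0 < F (w - h)"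
    using \<open>F w = 0\<close> by auto
  define h where "h = min (e/2) (w - s)"
  have "0 < h" "h < e" "s \<le> w - h" "w - h < w"
    using e(1) w(1) by (auto simp: h_def)
  then show False
    using e(2) w(4) by (meson less_asym)
qed

lemma square_less_1: "-1 < x \<Longrightarrow> x < 1 \<Longrightarrow> (x::real)\<^sup>2 < 1"
  by (simp add: abs_square_less_1 abs_less_iff)

lemma oint_self [simp]: "oint f a a = 0"
  by (simp add: oint_def)

lemma oint_has_real_derivative:
  fixes f :: "real \<Rightarrow> real"
  assumes cf: "continuous_on UNIV f"
  shows "((\<lambda>x. oint f c x) has_real_derivative f x) (at x)"
proof -
  define M where "M = \<bar>c\<bar> + \<bar>x\<bar> + 1"
  have integrable: "f integrable_on {u..v}" for u v
    by (rule integrable_continuous_real) (rule continuous_on_subset[OF cf], simp)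
  have oint_eq: "oint f c y = integral {-M..y} f - integral {-M..c} f" if "-M \<le> y" for y
  proof (cases "c \<le> y")
    case True
    have "integral {-M..c} f + integral {c..y} f = integral {-M..y} f"
      by (rule Henstock_Kurzweil_Integration.integral_combine) (use True that M_def integrable in auto)
    then show ?thesis using True by (simp add: oint_def)
  next
    case False
    have "integral {-M..y} f + integral {y..c} f = integral {-M..c} f"
      by (rule Henstock_Kurzweil_Integration.integral_combine) (use False that M_def integrable in auto)
    then show ?thesis using False by (simp add: oint_def)
  qed
  have "((\<lambda>y. integral {-M..y} f) has_real_derivative f x) (at x within {-M..M})"
    by (rule integral_has_real_derivative) (use M_def in \<open>auto intro: continuous_on_subset[OF cf]\<close>)
  then have "((\<lambda>y. integral {-M..y} f) has_real_derivative f x) (at x)"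
    using at_within_Icc_at[of "-M" x M] M_def by auto
  then have "((\<lambda>y. integral {-M..y} f - integral {-M..c} f) has_real_derivative f x) (at x)"
    by (auto intro!: derivative_eq_intros)
  then show ?thesis
    by (rule has_field_derivative_transform_within_open[where S="{-M<..}"]) (use M_def oint_eq in auto)
qed

lemma oint_minus_of_even:
  fixes f :: "real \<Rightarrow> real"
  assumes cf: "continuous_on UNIV f" and even: "\<And>t. f (-t) = f t"
  shows "oint f 0 (-x) = - oint f 0 x"
proof -
  have "((\<lambda>x. oint f 0 x + oint f 0 (-x)) has_real_derivative 0) (at y)" for y
  proof -
    have "((\<lambda>x. oint f 0 x + oint f 0 (-x)) has_real_derivative f y + f (-y) * (-1)) (at y)"
      by (rule derivative_eq_intros oint_has_real_derivative[OF cf]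
          DERIV_chain2[OF oint_has_real_derivative[OF cf]] | simp)+
    then show ?thesis using even by simp
  qed
  from DERIV_isconst_all[OF allI[OF this], of x 0] show ?thesis by simp
qed

lemma oint_add_period_of_even:
  fixes f :: "real \<Rightarrow> real"
  assumes cf: "continuous_on UNIV f" and even: "\<And>t. f (-t) = f t"
    and periodic: "\<And>t. f (t + p) = f t"
  shows "oint f 0 (x + p) = oint f 0 x + 2 * oint f 0 (p/2)"
proof -
  have "((\<lambda>x. oint f 0 (x + p) - oint f 0 x) has_real_derivative 0) (at y)" for y
  proof -
    have "((\<lambda>x. oint f 0 (x + p) - oint f 0 x) has_real_derivative f (y + p) * 1 - f y) (at y)"
      by (rule derivative_eq_intros oint_has_real_derivative[OF cf]
          DERIV_chain2[OF oint_has_real_derivative[OF cf]] | simp)+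
    then show ?thesis using periodic by simp
  qed
  from DERIV_isconst_all[OF allI[OF this], of x "-p/2"] oint_minus_of_even[OF cf even, of "p/2"]
  show ?thesis by simp
qed

lemma oint_odd_half_period:
  fixes f :: "real \<Rightarrow> real"
  assumes cf: "continuous_on UNIV f" and even: "\<And>t. f (-t) = f t"
    and periodic: "\<And>t. f (t + p) = f t"
  shows "oint f 0 (- p/2 + real n * p) = (2 * real n - 1) * oint f 0 (p/2)"
proof (induction n)
  case 0
  show ?case using oint_minus_of_even[OF cf even, of "p/2"] by simp
next
  case (Suc n)
  have "oint f 0 (- p/2 + real (Suc n) * p) = oint f 0 ((- p/2 + real n * p) + p)"
    by (simp add: algebra_simps)
  also have "\<dots> = (2 * real n - 1) * oint f 0 (p/2) + 2 * oint f 0 (p/2)"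
    by (simp only: oint_add_period_of_even[OF cf even periodic] Suc.IH)
  finally show ?case by (simp add: algebra_simps)
qed

section \<open>Legendre elliptic integrals\<close>

definition ell_delta :: "real \<Rightarrow> real \<Rightarrow> real" where
  "ell_delta q t = sqrt (1 - q\<^sup>2 * (sin t)\<^sup>2)"

lemma ell_radicand_pos:
  fixes q :: real
  assumes "q\<^sup>2 < 1"
  shows "0 < 1 - q\<^sup>2 * (sin t)\<^sup>2"
proof -
  have "(sin t)\<^sup>2 \<le> 1" by (simp add: abs_square_le_1)
  then have "q\<^sup>2 * (sin t)\<^sup>2 \<le> q\<^sup>2" by (simp add: mult_left_le)
  with assms show ?thesis by linarith
qed

lemma ell_radicand_nonzero: "-1 < x \<Longrightarrow> x < 1 \<Longrightarrow> (x::real)\<^sup>2 * (sin t)\<^sup>2 \<noteq> 1"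
  using ell_radicand_pos[OF square_less_1, of x t] by auto

lemma ell_delta_pos: "q\<^sup>2 < 1 \<Longrightarrow> 0 < ell_delta q t"
  using ell_radicand_pos[of q t] by (simp add: ell_delta_def)

lemma ell_delta_nonzero: "q\<^sup>2 < 1 \<Longrightarrow> ell_delta q t \<noteq> 0"
  using ell_delta_pos[of q t] by simp

lemma ell_delta_squared: "q\<^sup>2 < 1 \<Longrightarrow> (ell_delta q t)\<^sup>2 = 1 - q\<^sup>2 * (sin t)\<^sup>2"
  using ell_radicand_pos[of q t] by (simp add: ell_delta_def)

lemma ell_delta_le_1: "q\<^sup>2 < 1 \<Longrightarrow> ell_delta q t \<le> 1"
  using ell_radicand_pos[of q t] by (simp add: ell_delta_def)

lemma ell_delta_ge: "q\<^sup>2 < 1 \<Longrightarrow> 1 - q\<^sup>2 \<le> ell_delta q t"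
proof -
  assume q: "q\<^sup>2 < 1"
  have "(ell_delta q t)\<^sup>2 \<le> ell_delta q t"
    using ell_delta_le_1[OF q, of t] ell_delta_pos[OF q, of t] by (simp add: power2_eq_square mult_left_le)
  moreover have "q\<^sup>2 * (sin t)\<^sup>2 \<le> q\<^sup>2"
    by (simp add: abs_square_le_1 mult_left_le)
  ultimately show ?thesis using ell_delta_squared[OF q, of t] by linarith
qed

lemma continuous_on_ell_delta: "continuous_on A (ell_delta q)"
  unfolding ell_delta_def by (intro continuous_intros)

lemma continuous_on_inverse_ell_delta:
  "q\<^sup>2 < 1 \<Longrightarrow> continuous_on A (\<lambda>t. 1 / ell_delta q t ^ k)"
  by (intro continuous_intros continuous_on_ell_delta) (simp add: ell_delta_nonzero)

lemma integrable_ell_delta: "ell_delta q integrable_on {a..b}"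
  by (intro integrable_continuous_real continuous_on_ell_delta)

lemma integrable_inverse_ell_delta:
  "q\<^sup>2 < 1 \<Longrightarrow> (\<lambda>t. 1 / ell_delta q t ^ k) integrable_on {a..b}"
  by (intro integrable_continuous_real continuous_on_inverse_ell_delta)

lemma ell_delta_has_derivative_arg:
  assumes "q\<^sup>2 < 1"
  shows "(ell_delta q has_real_derivative - (q\<^sup>2 * sin t * cos t) / ell_delta q t) (at t)"
proof -
  have "((\<lambda>t. sqrt (1 - q\<^sup>2 * (sin t)\<^sup>2)) has_real_derivative
      inverse (sqrt (1 - q\<^sup>2 * (sin t)\<^sup>2)) / 2 * (0 - q\<^sup>2 * (2 * sin t ^ 1 * cos t))) (at t)"
    using ell_radicand_pos[OF assms, of t] by (auto intro!: derivative_eq_intros)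
  then show ?thesis by (simp add: ell_delta_def[abs_def] field_simps)
qed

lemma ell_delta_has_derivative_modulus:
  assumes "q\<^sup>2 < 1"
  shows "((\<lambda>q. ell_delta q t) has_real_derivative - (q * (sin t)\<^sup>2 / ell_delta q t)) (at q)"
proof -
  have "((\<lambda>q. sqrt (1 - q\<^sup>2 * (sin t)\<^sup>2)) has_real_derivative
      inverse (sqrt (1 - q\<^sup>2 * (sin t)\<^sup>2)) / 2 * (0 - 2 * q ^ 1 * (sin t)\<^sup>2)) (at q)"
    using ell_radicand_pos[OF assms, of t] by (auto intro!: derivative_eq_intros)
  then show ?thesis by (simp add: ell_delta_def field_simps)
qed

lemma continuous_on_ellF_integrand:
  "q\<^sup>2 < 1 \<Longrightarrow> continuous_on UNIV (\<lambda>t. 1 / sqrt (1 - q\<^sup>2 * (sin t)\<^sup>2))"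
  using continuous_on_inverse_ell_delta[of q UNIV 1] by (simp add: ell_delta_def)

lemma continuous_on_ellE_integrand: "continuous_on UNIV (\<lambda>t. sqrt (1 - q\<^sup>2 * (sin t)\<^sup>2))"
  using continuous_on_ell_delta[of UNIV q] by (simp add: ell_delta_def[abs_def])

lemma ellF_has_real_derivative:
  "q\<^sup>2 < 1 \<Longrightarrow> ((\<lambda>x. ellF x q) has_real_derivative 1 / ell_delta q x) (at x)"
  unfolding ellF_def ell_delta_def by (rule oint_has_real_derivative[OF continuous_on_ellF_integrand])

lemma ellE_has_real_derivative: "((\<lambda>x. ellE x q) has_real_derivative ell_delta q x) (at x)"
  unfolding ellE_def ell_delta_def by (rule oint_has_real_derivative[OF continuous_on_ellE_integrand])

lemma ellF_minus: "q\<^sup>2 < 1 \<Longrightarrow> ellF (-x) q = - ellF x q"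
  unfolding ellF_def by (rule oint_minus_of_even[OF continuous_on_ellF_integrand]) auto

lemma ellF_odd_half_pi:
  "q\<^sup>2 < 1 \<Longrightarrow> ellF (- pi/2 + real n * pi) q = (2 * real n - 1) * ellK q"
  unfolding ellK_def ellF_def by (rule oint_odd_half_period[OF continuous_on_ellF_integrand]) auto

lemma ellE_odd_half_pi: "ellE (- pi/2 + real n * pi) q = (2 * real n - 1) * ellEc q"
  unfolding ellEc_def ellE_def by (rule oint_odd_half_period[OF continuous_on_ellE_integrand]) auto

lemma strict_mono_ellF: "q\<^sup>2 < 1 \<Longrightarrow> strict_mono (\<lambda>x. ellF x q)"
  by (intro strict_monoI DERIV_pos_imp_increasing[where f="\<lambda>x. ellF x q"])
     (auto intro!: ellF_has_real_derivative ell_delta_pos)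

lemma ellK_pos: "q\<^sup>2 < 1 \<Longrightarrow> 0 < ellK q"
  using strict_monoD[OF strict_mono_ellF, of q 0 "pi/2"] by (simp add: ellK_def ellF_def)

lemma surj_ellF:
  assumes q: "q\<^sup>2 < 1"
  shows "\<exists>x. ellF x q = y"
proof -
  obtain N :: nat where N: "\<bar>y\<bar> / ellK q < real N"
    using reals_Archimedean2 by blast
  with ellK_pos[OF q] have y_bound: "\<bar>y\<bar> < real N * ellK q" and "1 \<le> N"
    by (auto simp: field_simps) (cases N; simp)
  define b where "b = - pi/2 + real N * pi"
  have "pi/2 \<le> real N * pi"
    using \<open>1 \<le> N\<close> by simp
  then have "-b \<le> b" by (simp add: b_def)
  have Fb: "ellF b q = (2 * real N - 1) * ellK q"
    unfolding b_def by (rule ellF_odd_half_pi[OF q])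
  moreover have "real N * ellK q \<le> (2 * real N - 1) * ellK q"
    using \<open>1 \<le> N\<close> ellK_pos[OF q] by (simp add: algebra_simps)
  ultimately have "ellF (-b) q \<le> y" "y \<le> ellF b q"
    using y_bound ellF_minus[OF q, of b] by linarith+
  moreover have "continuous_on {-b..b} (\<lambda>x. ellF x q)"
    using ellF_has_real_derivative[OF q]
    by (intro continuous_at_imp_continuous_on ballI) (blast intro: DERIV_isCont)
  ultimately show ?thesis
    using IVT'[of "\<lambda>x. ellF x q", OF _ _ \<open>-b \<le> b\<close>] by blast
qed

lemma ellF_am:
  assumes q: "q\<^sup>2 < 1"
  shows "ellF (am y q) q = y"
proof -
  have "\<exists>!x. ellF x q = y"
    using surj_ellF[OF q] strict_mono_eq[OF strict_mono_ellF[OF q]] by metis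
  then show ?thesis unfolding am_def by (rule theI')
qed

lemma am_ellF: "q\<^sup>2 < 1 \<Longrightarrow> am (ellF x q) q = x"
  using ellF_am strict_mono_ellF by (metis strict_mono_eq)

lemma am_has_real_derivative:
  assumes q: "q\<^sup>2 < 1"
  shows "((\<lambda>y. am y q) has_real_derivative ell_delta q (am y q)) (at y)"
proof -
  have "isCont (\<lambda>y. am y q) (ellF (am y q) q)"
    by (rule isCont_inverse_function[where d=1])
       (auto simp: am_ellF[OF q] intro: DERIV_isCont[OF ellF_has_real_derivative[OF q]])
  then have cont: "isCont (\<lambda>y. am y q) y"
    by (simp add: ellF_am[OF q])
  have "((\<lambda>y. am y q) has_real_derivative inverse (1 / ell_delta q (am y q))) (at y)"
    by (rule DERIV_inverse_function[where f="\<lambda>x. ellF x q" and a="y - 1" and b="y + 1"])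
       (use cont in \<open>auto simp: ellF_has_real_derivative[OF q] ell_delta_nonzero[OF q] ellF_am[OF q]\<close>)
  then show ?thesis by simp
qed

lemma am_odd_multiple_ellK:
  assumes "q\<^sup>2 < 1"
  shows "am ((2 * real n - 1) * ellK q) q = - pi/2 + real n * pi"
  using am_ellF[OF assms, of "- pi/2 + real n * pi"] unfolding ellF_odd_half_pi[OF assms] .

lemma ellK_eq_integral: "ellK q = integral {0..pi/2} (\<lambda>t. 1 / ell_delta q t)"
  by (simp add: ellK_def ellF_def oint_def ell_delta_def)

lemma ellEc_eq_integral: "ellEc q = integral {0..pi/2} (ell_delta q)"
  by (simp add: ellEc_def ellE_def oint_def ell_delta_def[abs_def])

lemma ellK_has_derivative_integral:
  assumes q: "q \<in> {-1<..<1}"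
  shows "(ellK has_real_derivative integral {0..pi/2} (\<lambda>t. q * (sin t)\<^sup>2 / ell_delta q t ^ 3)) (at q)"
  unfolding ellK_eq_integral[abs_def]
proof (rule has_real_derivative_integral_parametric[OF _ _ q])
  fix x t :: real assume "x \<in> {-1<..<1}"
  then have x: "x\<^sup>2 < 1" by (simp add: square_less_1)
  have "((\<lambda>x. 1 / ell_delta x t) has_real_derivative
      - (- (x * (sin t)\<^sup>2 / ell_delta x t)) / (ell_delta x t * ell_delta x t)) (at x)"
    by (rule derivative_eq_intros ell_delta_has_derivative_modulus[OF x] refl
        | simp add: ell_delta_nonzero[OF x])+
  then show "((\<lambda>x. 1 / ell_delta x t) has_real_derivative x * (sin t)\<^sup>2 / ell_delta x t ^ 3) (at x)"
    using ell_delta_nonzero[OF x, of t] by (simp add: field_simps power3_eq_cube)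
next
  show "continuous_on ({-1<..<1} \<times> {0..pi/2}) (\<lambda>(x, t). x * (sin t)\<^sup>2 / ell_delta x t ^ 3)"
    unfolding case_prod_unfold ell_delta_def
    by (intro continuous_intros) (auto simp: ell_radicand_nonzero)
qed (use integrable_inverse_ell_delta[of _ 1] square_less_1 in auto)

lemma ellEc_has_derivative_integral:
  assumes q: "q \<in> {-1<..<1}"
  shows "(ellEc has_real_derivative integral {0..pi/2} (\<lambda>t. - (q * (sin t)\<^sup>2 / ell_delta q t))) (at q)"
  unfolding ellEc_eq_integral[abs_def]
proof (rule has_real_derivative_integral_parametric[OF _ _ q])
  show "continuous_on ({-1<..<1} \<times> {0..pi/2}) (\<lambda>(x, t). - (x * (sin t)\<^sup>2 / ell_delta x t))"
    unfolding case_prod_unfold ell_delta_def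
    by (intro continuous_intros) (auto simp: ell_radicand_nonzero)
qed (auto simp: integrable_ell_delta intro: ell_delta_has_derivative_modulus square_less_1)

lemma ell_delta_cube_antiderivative:
  assumes q: "q\<^sup>2 < 1"
  shows "((\<lambda>t. q\<^sup>2 * (sin t * cos t / ell_delta q t)) has_real_derivative
    ell_delta q t - (1 - q\<^sup>2) * (1 / ell_delta q t ^ 3)) (at t)"
proof -
  define \<Delta> s c where "\<Delta> = ell_delta q t" and "s = sin t" and "c = cos t"
  have ne: "\<Delta> \<noteq> 0" using ell_delta_nonzero[OF q] by (simp add: \<Delta>_def)
  have \<Delta>2: "\<Delta>\<^sup>2 = 1 - q\<^sup>2 * s\<^sup>2" using ell_delta_squared[OF q] by (simp add: \<Delta>_def s_def)
  have c2: "c\<^sup>2 = 1 - s\<^sup>2" by (simp add: c_def s_def cos_squared_eq)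
  have "((\<lambda>t. q\<^sup>2 * (sin t * cos t / ell_delta q t)) has_real_derivative
      q\<^sup>2 * (((c * c + s * - s) * \<Delta> - s * c * (- (q\<^sup>2 * s * c) / \<Delta>)) / (\<Delta> * \<Delta>))) (at t)"
    unfolding \<Delta>_def s_def c_def
    by (rule derivative_eq_intros ell_delta_has_derivative_arg[OF q] refl | simp add: ell_delta_nonzero[OF q])+
  moreover have "q\<^sup>2 * (((c * c + s * - s) * \<Delta> - s * c * (- (q\<^sup>2 * s * c) / \<Delta>)) / (\<Delta> * \<Delta>))
      = (q\<^sup>2 * (c\<^sup>2 - s\<^sup>2) * \<Delta>\<^sup>2 + q\<^sup>2 * q\<^sup>2 * s\<^sup>2 * c\<^sup>2) / \<Delta> ^ 3"
    using ne by (simp add: field_simps power2_eq_square power3_eq_cube)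
  moreover have "q\<^sup>2 * (c\<^sup>2 - s\<^sup>2) * \<Delta>\<^sup>2 + q\<^sup>2 * q\<^sup>2 * s\<^sup>2 * c\<^sup>2 = (\<Delta>\<^sup>2)\<^sup>2 - (1 - q\<^sup>2)"
    unfolding \<Delta>2 c2 by algebra
  moreover have "((\<Delta>\<^sup>2)\<^sup>2 - (1 - q\<^sup>2)) / \<Delta> ^ 3 = (\<Delta>\<^sup>2)\<^sup>2 / \<Delta> ^ 3 - (1 - q\<^sup>2) * (1 / \<Delta> ^ 3)"
    by (simp add: diff_divide_distrib)
  moreover have "(\<Delta>\<^sup>2)\<^sup>2 / \<Delta> ^ 3 = \<Delta>"
    using ne by (simp add: power2_eq_square power3_eq_cube)
  ultimately show ?thesis by (simp add: \<Delta>_def)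
qed

lemma integral_inverse_ell_delta_cube:
  assumes q: "q\<^sup>2 < 1"
  shows "integral {0..pi/2} (\<lambda>t. 1 / ell_delta q t ^ 3) = ellEc q / (1 - q\<^sup>2)"
proof -
  define H where "H = (\<lambda>t. q\<^sup>2 * (sin t * cos t / ell_delta q t))"
  note H' = ell_delta_cube_antiderivative[OF q, folded H_def]
  have "((\<lambda>t. ell_delta q t - (1 - q\<^sup>2) * (1 / ell_delta q t ^ 3)) has_integral (H (pi/2) - H 0))
      {0..pi/2}"
    using H' by (intro has_integral_of_real_derivative) auto
  then have vanishing: "((\<lambda>t. ell_delta q t - (1 - q\<^sup>2) * (1 / ell_delta q t ^ 3)) has_integral 0) {0..pi/2}"
    by (simp add: H_def)
  have "((\<lambda>t. ell_delta q t - (1 - q\<^sup>2) * (1 / ell_delta q t ^ 3)) has_integral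
      ellEc q - (1 - q\<^sup>2) * integral {0..pi/2} (\<lambda>t. 1 / ell_delta q t ^ 3)) {0..pi/2}"
    unfolding ellEc_eq_integral
    by (intro has_integral_diff has_integral_mult_right integrable_integral
        integrable_ell_delta integrable_inverse_ell_delta q)
  from has_integral_unique[OF this vanishing] q show ?thesis
    by (simp add: eq_divide_eq)
qed

lemma ellK_has_real_derivative:
  assumes q: "0 < q" "q < 1"
  shows "(ellK has_real_derivative (ellEc q - (1 - q\<^sup>2) * ellK q) / (q * (1 - q\<^sup>2))) (at q)"
proof -
  have q2: "q\<^sup>2 < 1" using square_less_1 q by simp
  have integrand: "q * (sin t)\<^sup>2 / ell_delta q t ^ 3 = (1 / ell_delta q t ^ 3 - 1 / ell_delta q t) / q" for t
    using q ell_delta_nonzero[OF q2, of t] ell_delta_squared[OF q2, of t]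
    by (simp add: field_simps power2_eq_square power3_eq_cube)
  have "((\<lambda>t. (1 / ell_delta q t ^ 3 - 1 / ell_delta q t) / q) has_integral
      (ellEc q / (1 - q\<^sup>2) - ellK q) / q) {0..pi/2}"
    unfolding ellK_eq_integral integral_inverse_ell_delta_cube[OF q2, symmetric]
    by (intro has_integral_divide has_integral_diff integrable_integral
        integrable_inverse_ell_delta[of q 1, simplified] integrable_inverse_ell_delta q2)
  then have "integral {0..pi/2} (\<lambda>t. q * (sin t)\<^sup>2 / ell_delta q t ^ 3)
      = (ellEc q / (1 - q\<^sup>2) - ellK q) / q"
    unfolding integrand by (rule integral_unique)
  also have "\<dots> = (ellEc q - (1 - q\<^sup>2) * ellK q) / (q * (1 - q\<^sup>2))"
    using q q2 by (simp add: field_simps)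
  finally show ?thesis
    using ellK_has_derivative_integral[of q] q by simp
qed

lemma ellEc_has_real_derivative:
  assumes q: "0 < q" "q < 1"
  shows "(ellEc has_real_derivative (ellEc q - ellK q) / q) (at q)"
proof -
  have q2: "q\<^sup>2 < 1" using square_less_1 q by simp
  have integrand: "- (q * (sin t)\<^sup>2 / ell_delta q t) = (ell_delta q t - 1 / ell_delta q t) / q" for t
    using q ell_delta_nonzero[OF q2, of t] ell_delta_squared[OF q2, of t]
    by (simp add: field_simps power2_eq_square)
  have "((\<lambda>t. (ell_delta q t - 1 / ell_delta q t) / q) has_integral (ellEc q - ellK q) / q) {0..pi/2}"
    unfolding ellK_eq_integral ellEc_eq_integral
    by (intro has_integral_divide has_integral_diff integrable_integral
        integrable_inverse_ell_delta[of q 1, simplified] integrable_ell_delta q2)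
  then have "integral {0..pi/2} (\<lambda>t. - (q * (sin t)\<^sup>2 / ell_delta q t)) = (ellEc q - ellK q) / q"
    unfolding integrand by (rule integral_unique)
  then show ?thesis
    using ellEc_has_derivative_integral[of q] q by simp
qed

lemma ellEc_minus_comodulus_sq_ellK_has_real_derivative:
  assumes q: "0 < q" "q < 1"
  shows "((\<lambda>q. ellEc q - (1 - q\<^sup>2) * ellK q) has_real_derivative q * ellK q) (at q)"
proof -
  have "((\<lambda>q. 1 - q\<^sup>2) has_real_derivative - (2 * q)) (at q)"
    by (auto intro!: derivative_eq_intros)
  from DERIV_diff[OF ellEc_has_real_derivative[OF q] DERIV_mult[OF this ellK_has_real_derivative[OF q]]]
  have "((\<lambda>q. ellEc q - (1 - q\<^sup>2) * ellK q) has_real_derivative (ellEc q - ellK q) / q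
      - (- (2 * q) * ellK q + (ellEc q - (1 - q\<^sup>2) * ellK q) / (q * (1 - q\<^sup>2)) * (1 - q\<^sup>2))) (at q)" .
  moreover have "(ellEc q - ellK q) / q
      - (- (2 * q) * ellK q + (ellEc q - (1 - q\<^sup>2) * ellK q) / (q * (1 - q\<^sup>2)) * (1 - q\<^sup>2))
      = q * ellK q"
    using q square_less_1[of q] by (simp add: field_simps power2_eq_square)
  ultimately show ?thesis
    by (rule DERIV_cong)
qed

lemma ellEc_pos: "q\<^sup>2 < 1 \<Longrightarrow> 0 < ellEc q"
proof -
  assume q: "q\<^sup>2 < 1"
  have "integral {0..pi/2} (\<lambda>t. 1 - q\<^sup>2) \<le> integral {0..pi/2} (ell_delta q)"
    by (rule integral_le) (auto intro: integrable_ell_delta ell_delta_ge[OF q])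
  moreover have "0 < pi/2 * (1 - q\<^sup>2)" using q by simp
  ultimately show ?thesis by (simp add: ellEc_eq_integral)
qed

lemma ellEc_le_ellK: "q\<^sup>2 < 1 \<Longrightarrow> ellEc q \<le> ellK q"
proof -
  assume q: "q\<^sup>2 < 1"
  have "ell_delta q t \<le> 1 / ell_delta q t" for t
    using ell_delta_le_1[OF q, of t] ell_delta_pos[OF q, of t]
    by (simp add: field_simps power2_eq_square mult_le_one)
  then show ?thesis unfolding ellK_eq_integral ellEc_eq_integral
    by (intro integral_le integrable_ell_delta integrable_inverse_ell_delta[of q 1, simplified] q) auto
qed

lemma ellEc_le_pi_half: "q\<^sup>2 < 1 \<Longrightarrow> ellEc q \<le> pi/2"
proof -
  assume q: "q\<^sup>2 < 1"
  have "integral {0..pi/2} (ell_delta q) \<le> integral {0..pi/2} (\<lambda>t. 1)"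
    by (rule integral_le) (auto intro: integrable_ell_delta ell_delta_le_1[OF q])
  then show ?thesis by (simp add: ellEc_eq_integral)
qed

lemma ellK_lower_bound:
  assumes e: "0 < e" "e < 1"
  shows "ln (pi/2 + e) - ln e \<le> ellK (sqrt (1 - e\<^sup>2))"
proof -
  define q where "q = sqrt (1 - e\<^sup>2)"
  have e2: "e\<^sup>2 < 1" using e by (simp add: power_less_one_iff)
  have q2: "q\<^sup>2 = 1 - e\<^sup>2" using e2 by (simp add: q_def)
  have q: "q\<^sup>2 < 1" using q2 e by simp
  have pointwise: "1 / (pi/2 + e - t) \<le> 1 / ell_delta q t" if t: "t \<in> {0..pi/2}" for t
  proof -
    have cos_nonneg: "0 \<le> cos t" using t by (intro cos_ge_zero) auto
    have "(ell_delta q t)\<^sup>2 = (cos t)\<^sup>2 + e\<^sup>2 * (sin t)\<^sup>2"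
      using ell_delta_squared[OF q, of t] q2 by (simp add: cos_squared_eq algebra_simps)
    also have "\<dots> \<le> (cos t)\<^sup>2 + e\<^sup>2"
      by (simp add: abs_square_le_1 mult_left_le)
    also have "\<dots> \<le> (cos t + e)\<^sup>2"
      using cos_nonneg e by (simp add: power2_eq_square algebra_simps)
    finally have "ell_delta q t \<le> cos t + e"
      using ell_delta_pos[OF q, of t] cos_nonneg e by (simp add: power2_le_iff_abs_le)
    also have "cos t \<le> pi/2 - t"
      using sin_x_le_x[of "pi/2 - t"] t by (simp add: sin_cos_eq)
    finally show ?thesis
      using ell_delta_pos[OF q, of t] by (simp add: frac_le)
  qed
  have "((\<lambda>t. 1 / (pi/2 + e - t)) has_integral (- ln (pi/2 + e - pi/2) - - ln (pi/2 + e - 0))) {0..pi/2}"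
  proof (rule has_integral_of_real_derivative)
    fix x :: real assume x: "0 \<le> x" "x \<le> pi/2"
    have "((\<lambda>t. - ln (pi/2 + e - t)) has_real_derivative - ((0 - 1) / (pi/2 + e - x))) (at x)"
      using x e by (auto intro!: derivative_eq_intros)
    then show "((\<lambda>t. - ln (pi/2 + e - t)) has_real_derivative 1 / (pi/2 + e - x)) (at x)"
      by simp
  qed simp
  then have "ln (pi/2 + e) - ln e = integral {0..pi/2} (\<lambda>t. 1 / (pi/2 + e - t))"
    by (simp add: integral_unique)
  also have "\<dots> \<le> integral {0..pi/2} (\<lambda>t. 1 / ell_delta q t)"
    using pointwise integrable_inverse_ell_delta[OF q, of 1] \<open>(_ has_integral _) _\<close>
    by (intro integral_le) auto
  finally show ?thesis by (simp add: ellK_eq_integral q_def)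
qed

section \<open>The zero of 2E - K\<close>

definition ellD :: "real \<Rightarrow> real" where
  "ellD q = 2 * ellEc q - ellK q"

lemma ellD_has_real_derivative:
  assumes q: "0 < q" "q < 1"
  shows "(ellD has_real_derivative ((1 - 2 * q\<^sup>2) * ellEc q - (1 - q\<^sup>2) * ellK q) / (q * (1 - q\<^sup>2))) (at q)"
proof -
  have "(ellD has_real_derivative
      2 * ((ellEc q - ellK q) / q) - (ellEc q - (1 - q\<^sup>2) * ellK q) / (q * (1 - q\<^sup>2))) (at q)"
    unfolding ellD_def[abs_def]
    by (intro DERIV_diff DERIV_cmult ellEc_has_real_derivative ellK_has_real_derivative q)
  moreover have "2 * ((ellEc q - ellK q) / q) - (ellEc q - (1 - q\<^sup>2) * ellK q) / (q * (1 - q\<^sup>2))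
      = ((1 - 2 * q\<^sup>2) * ellEc q - (1 - q\<^sup>2) * ellK q) / (q * (1 - q\<^sup>2))"
    using q square_less_1[of q] by (simp add: field_simps)
  ultimately show ?thesis by (rule DERIV_cong)
qed

lemma ellD_deriv_neg:
  assumes q: "0 < q" "q < 1"
  shows "((1 - 2 * q\<^sup>2) * ellEc q - (1 - q\<^sup>2) * ellK q) / (q * (1 - q\<^sup>2)) < 0"
proof -
  have q2: "q\<^sup>2 < 1" using square_less_1 q by simp
  have "(1 - 2 * q\<^sup>2) * ellEc q < (1 - q\<^sup>2) * ellK q"
  proof (cases "0 \<le> 1 - 2 * q\<^sup>2")
    case True
    then have "(1 - 2 * q\<^sup>2) * ellEc q \<le> (1 - 2 * q\<^sup>2) * ellK q"
      by (intro mult_left_mono ellEc_le_ellK[OF q2])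
    also have "\<dots> < (1 - q\<^sup>2) * ellK q"
      using ellK_pos[OF q2] q by simp
    finally show ?thesis .
  next
    case False
    then have "(1 - 2 * q\<^sup>2) * ellEc q < 0"
      using ellEc_pos[OF q2] by (simp add: mult_neg_pos)
    also have "0 < (1 - q\<^sup>2) * ellK q"
      using ellK_pos[OF q2] q2 by simp
    finally show ?thesis .
  qed
  moreover have "0 < q * (1 - q\<^sup>2)" using q q2 by simp
  ultimately show ?thesis by (simp add: divide_neg_pos)
qed

lemma strict_antimono_on_ellD: "strict_antimono_on {0<..<1} ellD"
  by (rule strict_antimono_on_if_deriv_neg) (auto intro: ellD_has_real_derivative ellD_deriv_neg)

lemma continuous_on_ellD: "continuous_on {0<..<1} ellD"
  by (rule DERIV_continuous_on, rule has_field_derivative_at_within, rule ellD_has_real_derivative) auto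

lemma inj_on_ellD: "inj_on ellD {0<..<1}"
  using strict_antimono_on_ellD strict_antimono_iff_antimono by blast

lemma integral_cos_squared_quarter: "integral {0..pi/2} (\<lambda>t. (cos t)\<^sup>2) = pi / 4"
proof -
  have "((\<lambda>t. (cos t)\<^sup>2) has_integral (pi/2 + sin (pi/2) * cos (pi/2)) / 2 - (0 + sin 0 * cos 0) / 2)
      {0..pi/2}"
  proof (rule has_integral_of_real_derivative)
    fix x :: real
    have "((\<lambda>t. (t + sin t * cos t) / 2) has_real_derivative (1 + (cos x * cos x + sin x * - sin x)) / 2) (at x)"
      by (auto intro!: derivative_eq_intros)
    moreover have "(1 + (cos x * cos x + sin x * - sin x)) / 2 = (cos x)\<^sup>2"
      using sin_cos_squared_add[of x] by (simp add: power2_eq_square field_simps)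
    ultimately show "((\<lambda>t. (t + sin t * cos t) / 2) has_real_derivative (cos x)\<^sup>2) (at x)"
      by (rule DERIV_cong)
  qed simp
  then show ?thesis by (simp add: integral_unique)
qed

lemma ellD_inverse_sqrt2_ge: "pi / 4 \<le> ellD (1 / sqrt 2)"
proof -
  define q :: real where "q = 1 / sqrt 2"
  have q2: "q\<^sup>2 = 1/2" by (simp add: q_def power_divide)
  then have q: "q\<^sup>2 < 1" by simp
  have pointwise: "(cos t)\<^sup>2 \<le> 2 * ell_delta q t - 1 / ell_delta q t" for t
  proof -
    have pos: "0 < ell_delta q t" by (rule ell_delta_pos[OF q])
    have "2 * ell_delta q t - 1 / ell_delta q t = (2 * (ell_delta q t)\<^sup>2 - 1) / ell_delta q t"
      using pos by (simp add: field_simps power2_eq_square)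
    also have "\<dots> = (cos t)\<^sup>2 / ell_delta q t"
      using ell_delta_squared[OF q, of t] q2 by (simp add: cos_squared_eq)
    also have "\<dots> \<ge> (cos t)\<^sup>2"
      using pos ell_delta_le_1[OF q, of t] by (simp add: le_divide_eq mult_left_le)
    finally show ?thesis .
  qed
  have "integral {0..pi/2} (\<lambda>t. (cos t)\<^sup>2) \<le> integral {0..pi/2} (\<lambda>t. 2 * ell_delta q t - 1 / ell_delta q t)"
  proof (rule integral_le)
    show "(\<lambda>t. (cos t)\<^sup>2) integrable_on {0..pi/2}"
      by (intro integrable_continuous_real continuous_intros)
    show "(\<lambda>t. 2 * ell_delta q t - 1 / ell_delta q t) integrable_on {0..pi/2}"
      by (intro integrable_diff integrable_on_mult_right integrable_ell_delta
          integrable_inverse_ell_delta[of q 1, simplified] q)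
  qed (rule pointwise)
  also have "\<dots> = ellD q"
    unfolding ellD_def ellK_eq_integral ellEc_eq_integral
    by (subst integral_diff) (auto intro: integrable_ell_delta integrable_inverse_ell_delta[of q 1, simplified] q)
  finally show ?thesis
    using integral_cos_squared_quarter q_def by simp
qed

(* K grows logarithmically as q tends to 1, while E stays below pi/2. *)
lemma ellD_neg_somewhere: "\<exists>q. 1 / sqrt 2 < q \<and> q < 1 \<and> ellD q < 0"
proof -
  define e :: real where "e = 1/64"
  define q where "q = sqrt (1 - e\<^sup>2)"
  have q2: "q\<^sup>2 = 1 - e\<^sup>2" by (simp add: q_def e_def power2_eq_square)
  have q: "q\<^sup>2 < 1" "0 < q"
    unfolding q2 by (simp_all add: q_def e_def power2_eq_square)
  then have "q < 1" by (simp add: power_less_one_iff)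
  have "(1 / sqrt 2)\<^sup>2 < q\<^sup>2" by (simp add: q2 e_def power_divide)
  then have "1 / sqrt 2 < q" using q by (simp add: power_less_imp_less_base)
  have "(2::real) ^ 6 \<le> (pi/2 + e) / e"
    using pi_gt3 by (simp add: e_def field_simps)
  then have "ln ((2::real) ^ 6) \<le> ln ((pi/2 + e) / e)"
    by (simp add: e_def)
  then have "6 * ln 2 \<le> ln ((pi/2 + e) / e)"
    by (simp only: ln_realpow[of 2 6])
  also have "\<dots> = ln (pi/2 + e) - ln e"
    using pi_gt_zero by (intro ln_divide_pos add_pos_pos) (auto simp: e_def)
  finally have "6 * ln 2 \<le> ln (pi/2 + e) - ln e" .
  then have "4 \<le> ellK q"
    using ln2_ge_two_thirds ellK_lower_bound[of e] by (simp add: e_def q_def)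
  moreover have "ellEc q \<le> pi/2" by (rule ellEc_le_pi_half[OF q(1)])
  ultimately have "ellD q < 0" using pi_less_4 by (simp add: ellD_def)
  then show ?thesis using \<open>1 / sqrt 2 < q\<close> \<open>q < 1\<close> by blast
qed

lemma pos_if_inverse_sqrt2_le: "1 / sqrt 2 \<le> x \<Longrightarrow> 0 < (x::real)"
  using less_le_trans[of 0 "1 / sqrt 2" x] by simp

lemma subset_unit_interval: "1 / sqrt 2 \<le> a \<Longrightarrow> b < 1 \<Longrightarrow> {a..b} \<subseteq> {0<..<1::real}"
  using pos_if_inverse_sqrt2_le by force

lemma q_star_eq_the_inv_into: "q_star = the_inv_into {0<..<1} ellD 0"
  by (simp add: q_star_def the_inv_into_def ellD_def)

lemma q_star:
  shows q_star_gt: "1 / sqrt 2 < q_star" and q_star_less_1: "q_star < 1"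
    and ellD_q_star: "ellD q_star = 0"
proof -
  obtain b where b: "1 / sqrt 2 < b" "b < 1" "ellD b < 0"
    using ellD_neg_somewhere by blast
  have pos: "0 < ellD (1 / sqrt 2)"
    using ellD_inverse_sqrt2_ge pi_gt_zero by linarith
  have "continuous_on {1 / sqrt 2..b} ellD"
    by (rule continuous_on_subset[OF continuous_on_ellD], rule subset_unit_interval) (use b in auto)
  obtain z where z: "1 / sqrt 2 \<le> z" "z \<le> b" "ellD z = 0"
    using IVT2'[of ellD b 0 "1 / sqrt 2"] b pos \<open>continuous_on {1 / sqrt 2..b} ellD\<close> by force
  have "z \<noteq> 1 / sqrt 2" using z pos by auto
  then have "1 / sqrt 2 < z" "z < 1" using z b by auto
  moreover have "q_star = z"
    unfolding q_star_eq_the_inv_into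
    using the_inv_into_f_eq[OF inj_on_ellD z(3)] pos_if_inverse_sqrt2_le[OF z(1)] \<open>z < 1\<close> by simp
  ultimately show "1 / sqrt 2 < q_star" "q_star < 1" "ellD q_star = 0"
    using z by simp_all
qed

lemma ellD_pos_iff:
  assumes q: "0 < q" "q < 1"
  shows "0 < ellD q \<longleftrightarrow> q < q_star"
proof -
  have decreasing: "ellD y < ellD x" if "0 < x" "x < y" "y < 1" for x y
    using strict_antimono_on_ellD that by (simp add: monotone_on_def)
  have "0 < q_star"
    using q_star_gt by (intro pos_if_inverse_sqrt2_le less_imp_le)
  then show ?thesis
    using decreasing[of q q_star] decreasing[of q_star q] q q_star_less_1 ellD_q_star
    by (cases q q_star rule: linorder_cases) auto
qed

section \<open>The functions f and g\<close>

lemma f_aux_has_real_derivative: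
  assumes q: "0 < q" "q < 1"
  shows "(f_aux has_real_derivative
    q * ((20 * q\<^sup>2 - 13) * ellK q + 20 * (1 - 2 * q\<^sup>2) * ellEc q)) (at q)"
proof -
  define K E where "K = ellK q" and "E = ellEc q"
  have "(f_aux has_real_derivative
      (16 * q^3 - 10 * q) * K + (4*q^4 - 5*q\<^sup>2 + 1) * ((E - (1 - q\<^sup>2) * K) / (q * (1 - q\<^sup>2)))
      + ((-32 * q^3 + 16 * q) * E + (-8*q^4 + 8*q\<^sup>2 - 1) * ((E - K) / q))) (at q)"
    unfolding f_aux_def[abs_def] K_def E_def
    by (rule derivative_eq_intros ellK_has_real_derivative[OF q] ellEc_has_real_derivative[OF q] refl
        | simp add: algebra_simps)+
  moreover have "(16 * q^3 - 10 * q) * K + (4*q^4 - 5*q\<^sup>2 + 1) * ((E - (1 - q\<^sup>2) * K) / (q * (1 - q\<^sup>2)))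
      + ((-32 * q^3 + 16 * q) * E + (-8*q^4 + 8*q\<^sup>2 - 1) * ((E - K) / q))
      = q * ((20 * q\<^sup>2 - 13) * K + 20 * (1 - 2 * q\<^sup>2) * E)"
  proof -
    have "1 - q\<^sup>2 \<noteq> 0" using square_less_1[of q] q by simp
    have "4*q^4 - 5*q\<^sup>2 + 1 = (1 - q\<^sup>2) * (1 - 4 * q\<^sup>2)" by algebra
    then have "(4*q^4 - 5*q\<^sup>2 + 1) * ((E - (1 - q\<^sup>2) * K) / (q * (1 - q\<^sup>2)))
        = (1 - 4 * q\<^sup>2) * (E - (1 - q\<^sup>2) * K) / q"
      using \<open>1 - q\<^sup>2 \<noteq> 0\<close> q by (simp add: field_simps)
    then show ?thesis using q by (simp add: field_simps) algebra
  qed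
  ultimately show ?thesis
    unfolding K_def E_def by (rule DERIV_cong)
qed

lemma g_aux_has_real_derivative:
  assumes q: "0 < q" "q < 1"
  shows "(g_aux has_real_derivative 16 * ellD q * f_aux q / (q * (1 - q\<^sup>2))) (at q)"
proof -
  define K E where "K = ellK q" and "E = ellEc q"
  have "(g_aux has_real_derivative
      8 * (2 * (2 * E - K) * (2 * ((E - K) / q) - (E - (1 - q\<^sup>2) * K) / (q * (1 - q\<^sup>2)))) * (2 * q\<^sup>2 - 1)
      + 8 * (2 * E - K)\<^sup>2 * (4 * q)) (at q)"
    unfolding g_aux_def[abs_def] K_def E_def
    by (rule derivative_eq_intros ellK_has_real_derivative[OF q] ellEc_has_real_derivative[OF q] refl
        | simp add: algebra_simps)+
  moreover have "8 * (2 * (2 * E - K) * (2 * ((E - K) / q) - (E - (1 - q\<^sup>2) * K) / (q * (1 - q\<^sup>2))))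
      * (2 * q\<^sup>2 - 1) + 8 * (2 * E - K)\<^sup>2 * (4 * q) = 16 * ellD q * f_aux q / (q * (1 - q\<^sup>2))"
  proof -
    have "1 - q\<^sup>2 \<noteq> 0" using square_less_1[of q] q by simp
    then show ?thesis unfolding ellD_def f_aux_def K_def[symmetric] E_def[symmetric]
      using q by (simp add: field_simps) algebra
  qed
  ultimately show ?thesis by (rule DERIV_cong)
qed

lemma f_aux_eq: "f_aux q = (1 - q\<^sup>2) * (1 - 4 * q\<^sup>2) * ellK q - (8 * (q\<^sup>2)\<^sup>2 - 8 * q\<^sup>2 + 1) * ellEc q"
  unfolding f_aux_def by (simp add: algebra_simps power_mult[of q 2 2, symmetric])

lemma f_aux_inverse_sqrt2_pos: "0 < f_aux (1 / sqrt 2)"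
proof -
  have "f_aux (1 / sqrt 2) = ellD (1 / sqrt 2) / 2"
    unfolding f_aux_eq ellD_def by (simp add: power_divide field_simps)
  then show ?thesis
    using ellD_inverse_sqrt2_ge pi_gt_zero by linarith
qed

lemma f_aux_sqrt_nine_tenths_neg: "f_aux (sqrt (9/10)) < 0"
proof -
  have q: "(sqrt (9/10))\<^sup>2 < (1::real)" by simp
  have "f_aux (sqrt (9/10)) = - (26/100) * ellK (sqrt (9/10)) - (28/100) * ellEc (sqrt (9/10))"
    unfolding f_aux_eq by (simp add: power2_eq_square)
  then show ?thesis using ellK_pos[OF q] ellEc_pos[OF q] by simp
qed

(* p stands for q\<^sup>2, and the hypothesis is f_aux q = 0 in the form of f_aux_eq. *)
lemma f_aux_zero_algebra:
  fixes p K E :: real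
  assumes p: "1/2 < p" "p < 1" and K: "0 < K" and E: "0 < E"
    and zero: "(1 - p) * (1 - 4 * p) * K = (8 * p\<^sup>2 - 8 * p + 1) * E"
  shows "K < 2 * E" and "(20 * p - 13) * K + 20 * (1 - 2 * p) * E < 0"
proof -
  define s where "s = 8 * p\<^sup>2 - 8 * p + 1"
  have "(1 - p) * (1 - 4 * p) < 0"
    using p by (simp add: mult_pos_neg)
  then have "(1 - p) * (1 - 4 * p) * K < 0"
    using K by (rule mult_neg_pos)
  then have "s * E < 0"
    using zero by (simp add: s_def)
  then have s: "s < 0"
    using E by (simp add: zero_less_mult_iff mult_less_0_iff)
  have "s * (2 * E - K) = 2 * (s * E) - s * K"
    by algebra
  also have "\<dots> = 2 * ((1 - p) * (1 - 4 * p) * K) - s * K"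
    using zero by (simp add: s_def)
  also have "\<dots> = (1 - 2 * p) * K"
    by (simp add: s_def algebra_simps power2_eq_square)
  finally have "s * (2 * E - K) < 0"
    using p K by (simp add: mult_neg_pos)
  then show "K < 2 * E"
    using s by (simp add: mult_less_0_iff)
  have "s * ((20 * p - 13) * K + 20 * (1 - 2 * p) * E)
      = (20 * p - 13) * s * K + 20 * (1 - 2 * p) * (s * E)"
    by algebra
  also have "\<dots> = (20 * p - 13) * s * K + 20 * (1 - 2 * p) * ((1 - p) * (1 - 4 * p) * K)"
    using zero by (simp add: s_def)
  also have "\<dots> = (16 * (p - 1/2)\<^sup>2 + 3) * K"
    by (simp add: s_def algebra_simps power2_eq_square)
  also have "\<dots> > 0"
    using K by (intro mult_pos_pos add_nonneg_pos) auto
  finally have "0 < s * ((20 * p - 13) * K + 20 * (1 - 2 * p) * E)" .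
  then show "(20 * p - 13) * K + 20 * (1 - 2 * p) * E < 0"
    using s by (simp add: zero_less_mult_iff)
qed

lemma
  assumes z: "1 / sqrt 2 \<le> z" "z < 1" and zero: "f_aux z = 0"
  shows inverse_sqrt2_less_zero_of_f_aux: "1 / sqrt 2 < z"
    and ellD_pos_at_zero_of_f_aux: "0 < ellD z"
    and f_aux_deriv_neg_at_zero: "z * ((20 * z\<^sup>2 - 13) * ellK z + 20 * (1 - 2 * z\<^sup>2) * ellEc z) < 0"
proof -
  show gt: "1 / sqrt 2 < z"
    using z zero f_aux_inverse_sqrt2_pos by (cases "z = 1 / sqrt 2") auto
  have "0 < z" using z(1) by (rule pos_if_inverse_sqrt2_le)
  then have z2: "z\<^sup>2 < 1" using square_less_1 z by simp
  have "(1 / sqrt 2)\<^sup>2 < z\<^sup>2"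
    using gt by (intro power_strict_mono) auto
  then have "1/2 < z\<^sup>2" by (simp add: power_divide)
  note signs = f_aux_zero_algebra[OF this z2 ellK_pos[OF z2] ellEc_pos[OF z2]]
  have "(1 - z\<^sup>2) * (1 - 4 * z\<^sup>2) * ellK z = (8 * (z\<^sup>2)\<^sup>2 - 8 * z\<^sup>2 + 1) * ellEc z"
    using zero by (simp add: f_aux_eq)
  from signs[OF this] \<open>0 < z\<close>
  show "0 < ellD z" "z * ((20 * z\<^sup>2 - 13) * ellK z + 20 * (1 - 2 * z\<^sup>2) * ellEc z) < 0"
    by (simp_all add: ellD_def mult_pos_neg)
qed

lemma f_aux_neg_after_zero:
  assumes "1 / sqrt 2 \<le> z" "f_aux z = 0" "z < y" "y < 1"
  shows "f_aux y < 0"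
proof (rule neg_after_zero_if_deriv_neg_at_zeros[where F=f_aux and a=z])
  fix x assume "x \<in> {z..y}"
  then have x: "1 / sqrt 2 \<le> x" "x < 1"
    using assms by auto
  then show "(f_aux has_real_derivative
      x * ((20 * x\<^sup>2 - 13) * ellK x + 20 * (1 - 2 * x\<^sup>2) * ellEc x)) (at x)"
    by (intro f_aux_has_real_derivative pos_if_inverse_sqrt2_le)
next
  fix x assume "x \<in> {z..y}" "f_aux x = 0"
  then show "x * ((20 * x\<^sup>2 - 13) * ellK x + 20 * (1 - 2 * x\<^sup>2) * ellEc x) < 0"
    using assms by (intro f_aux_deriv_neg_at_zero) auto
qed (use assms in auto)

lemma continuous_on_f_aux: "continuous_on {0<..<1} f_aux"
  by (rule DERIV_continuous_on, rule has_field_derivative_at_within, rule f_aux_has_real_derivative) auto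

lemma q_hat:
  shows q_hat_gt: "1 / sqrt 2 < q_hat" and q_hat_less_1: "q_hat < 1" and f_aux_q_hat: "f_aux q_hat = 0"
proof -
  have "1 / sqrt 2 < sqrt (9/10::real)"
    by (rule power2_less_imp_less) (auto simp: power_divide)
  moreover have "continuous_on {1 / sqrt 2..sqrt (9/10)} f_aux"
    by (rule continuous_on_subset[OF continuous_on_f_aux], rule subset_unit_interval) auto
  ultimately obtain z where z: "1 / sqrt 2 \<le> z" "z \<le> sqrt (9/10)" "f_aux z = 0"
    using IVT2'[of f_aux "sqrt (9/10)" 0 "1 / sqrt 2"] f_aux_sqrt_nine_tenths_neg f_aux_inverse_sqrt2_pos by force
  then have "z < 1"
    using order.strict_trans1[of z "sqrt (9/10)" 1] by simp
  have "q_hat = z"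
    unfolding q_hat_def
  proof (rule the_equality)
    fix y assume y: "1 / sqrt 2 \<le> y \<and> y < 1 \<and> f_aux y = 0"
    show "y = z"
      using f_aux_neg_after_zero[of y z] f_aux_neg_after_zero[of z y] y z \<open>z < 1\<close>
      by (cases y z rule: linorder_cases) auto
  qed (use z \<open>z < 1\<close> in auto)
  then show "1 / sqrt 2 < q_hat" "q_hat < 1" "f_aux q_hat = 0"
    using z \<open>z < 1\<close> inverse_sqrt2_less_zero_of_f_aux by auto
qed

lemma ellD_q_hat_pos: "0 < ellD q_hat"
  using q_hat_gt q_hat_less_1 f_aux_q_hat by (intro ellD_pos_at_zero_of_f_aux) auto

lemma q_hat_less_q_star: "q_hat < q_star"
  using ellD_pos_iff[of q_hat] ellD_q_hat_pos q_hat_less_1 pos_if_inverse_sqrt2_le[of q_hat] q_hat_gt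
  by simp

lemma f_aux_neg_after_q_hat: "q_hat < q \<Longrightarrow> q < 1 \<Longrightarrow> f_aux q < 0"
  using f_aux_neg_after_zero[of q_hat q] q_hat_gt f_aux_q_hat by simp

lemma f_aux_pos_before_q_hat:
  assumes "1 / sqrt 2 \<le> q" "q < q_hat"
  shows "0 < f_aux q"
proof (rule ccontr)
  assume "\<not> 0 < f_aux q"
  moreover have "continuous_on {1 / sqrt 2..q} f_aux"
    by (rule continuous_on_subset[OF continuous_on_f_aux], rule subset_unit_interval)
       (use assms q_hat_less_1 in auto)
  ultimately obtain u where "1 / sqrt 2 \<le> u" "u \<le> q" "f_aux u = 0"
    using IVT2'[of f_aux q 0 "1 / sqrt 2"] assms f_aux_inverse_sqrt2_pos by force
  then show False
    using f_aux_neg_after_zero[of u q_hat] assms f_aux_q_hat q_hat_less_1 by simp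
qed

lemma continuous_on_g_aux: "continuous_on {0<..<1} g_aux"
  by (rule DERIV_continuous_on, rule has_field_derivative_at_within, rule g_aux_has_real_derivative) auto

lemma g_aux_inverse_sqrt2: "g_aux (1 / sqrt 2) = 0"
  by (simp add: g_aux_def power_divide)

lemma g_aux_q_star: "g_aux q_star = 0"
  using ellD_q_star by (simp add: g_aux_def ellD_def)

lemma lambda_hat_pos: "0 < lambda_hat"
proof -
  have "(1 / sqrt 2)\<^sup>2 < q_hat\<^sup>2"
    using q_hat_gt by (intro power_strict_mono) auto
  then have "0 < 2 * q_hat\<^sup>2 - 1"
    by (simp add: power_divide)
  then show ?thesis
    using ellD_q_hat_pos by (simp add: lambda_hat_def g_aux_def ellD_def[symmetric])
qed

lemma strict_mono_on_g_aux: "strict_mono_on {1 / sqrt 2..q_hat} g_aux"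
proof (rule strict_mono_on_if_deriv_pos)
  fix x assume "x \<in> {1 / sqrt 2..q_hat}"
  then show "(g_aux has_real_derivative 16 * ellD x * f_aux x / (x * (1 - x\<^sup>2))) (at x)"
    using q_hat_less_1 by (intro g_aux_has_real_derivative pos_if_inverse_sqrt2_le) auto
next
  fix x assume "x \<in> interior {1 / sqrt 2..q_hat}"
  then have x: "1 / sqrt 2 < x" "x < q_hat" by auto
  then have "0 < x" "x < 1"
    using pos_if_inverse_sqrt2_le[of x] q_hat_less_1 by auto
  then have "0 < ellD x" "0 < x * (1 - x\<^sup>2)"
    using x q_hat_less_q_star ellD_pos_iff[of x] square_less_1[of x] by auto
  moreover have "0 < f_aux x"
    using x by (intro f_aux_pos_before_q_hat) auto
  ultimately show "0 < 16 * ellD x * f_aux x / (x * (1 - x\<^sup>2))"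
    by simp
qed simp

lemma strict_antimono_on_g_aux: "strict_antimono_on {q_hat..q_star} g_aux"
proof (rule strict_antimono_on_if_deriv_neg)
  fix x assume "x \<in> {q_hat..q_star}"
  then show "(g_aux has_real_derivative 16 * ellD x * f_aux x / (x * (1 - x\<^sup>2))) (at x)"
    using q_hat_gt q_star_less_1 by (intro g_aux_has_real_derivative pos_if_inverse_sqrt2_le) auto
next
  fix x assume "x \<in> interior {q_hat..q_star}"
  then have x: "q_hat < x" "x < q_star" by auto
  then have "0 < x" "x < 1"
    using pos_if_inverse_sqrt2_le[of x] q_hat_gt q_star_less_1 by auto
  then have "0 < ellD x" "0 < x * (1 - x\<^sup>2)"
    using x ellD_pos_iff[of x] square_less_1[of x] by auto
  moreover have "f_aux x < 0"
    using x \<open>x < 1\<close> by (intro f_aux_neg_after_q_hat)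
  ultimately show "16 * ellD x * f_aux x / (x * (1 - x\<^sup>2)) < 0"
    by (simp add: mult_pos_neg divide_neg_pos)
qed simp

lemma q1:
  assumes c: "0 < c" "c \<le> lambda_hat"
  shows q1_gt: "1 / sqrt 2 < q1 c" and q1_le_q_hat: "q1 c \<le> q_hat" and g_aux_q1: "g_aux (q1 c) = c"
proof -
  have "continuous_on {1 / sqrt 2..q_hat} g_aux"
    by (rule continuous_on_subset[OF continuous_on_g_aux], rule subset_unit_interval)
       (use q_hat_less_1 in auto)
  then have "\<exists>z \<ge> 1 / sqrt 2. z \<le> q_hat \<and> g_aux z = c"
    by (rule IVT'[rotated 3]) (use c q_hat_gt g_aux_inverse_sqrt2 in \<open>auto simp: lambda_hat_def\<close>)
  then obtain z where z: "1 / sqrt 2 \<le> z" "z \<le> q_hat" "g_aux z = c"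
    by blast
  have "inj_on g_aux {1 / sqrt 2<..q_hat}"
    using strict_mono_on_imp_inj_on[OF strict_mono_on_g_aux] by (rule inj_on_subset) auto
  moreover have "z \<in> {1 / sqrt 2<..q_hat}"
    using z c g_aux_inverse_sqrt2 by (cases "z = 1 / sqrt 2") auto
  ultimately have "the_inv_into {1 / sqrt 2<..q_hat} g_aux c = z"
    by (rule the_inv_into_f_eq[where f=g_aux, OF _ z(3)])
  then have "q1 c = z"
    by (simp add: q1_def the_inv_into_def)
  then show "1 / sqrt 2 < q1 c" "q1 c \<le> q_hat" "g_aux (q1 c) = c"
    using z \<open>z \<in> {1 / sqrt 2<..q_hat}\<close> by auto
qed

lemma q2:
  assumes c: "0 < c" "c \<le> lambda_hat"
  shows q_hat_le_q2: "q_hat \<le> q2 c" and q2_less_q_star: "q2 c < q_star" and g_aux_q2: "g_aux (q2 c) = c"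
proof -
  have "continuous_on {q_hat..q_star} g_aux"
    by (rule continuous_on_subset[OF continuous_on_g_aux], rule subset_unit_interval)
       (use q_star_less_1 q_hat_gt in auto)
  then have "\<exists>z \<ge> q_hat. z \<le> q_star \<and> g_aux z = c"
    by (rule IVT2'[rotated 3]) (use c q_hat_less_q_star g_aux_q_star in \<open>auto simp: lambda_hat_def\<close>)
  then obtain z where z: "q_hat \<le> z" "z \<le> q_star" "g_aux z = c"
    by blast
  have "inj_on g_aux {q_hat..q_star}"
    using strict_antimono_on_g_aux strict_antimono_iff_antimono by blast
  then have "inj_on g_aux {q_hat..<q_star}"
    by (rule inj_on_subset) auto
  moreover have "z \<in> {q_hat..<q_star}"
    using z c g_aux_q_star by (cases "z = q_star") auto
  ultimately have "the_inv_into {q_hat..<q_star} g_aux c = z"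
    by (rule the_inv_into_f_eq[where f=g_aux, OF _ z(3)])
  then have "q2 c = z"
    by (simp add: q2_def the_inv_into_def)
  then show "q_hat \<le> q2 c" "q2 c < q_star" "g_aux (q2 c) = c"
    using z \<open>z \<in> {q_hat..<q_star}\<close> by auto
qed

section \<open>The reduced energy\<close>

definition reduced_energy :: "real \<Rightarrow> real \<Rightarrow> real" where
  "reduced_energy c q = 16 * ellD q * (ellEc q - (1 - q\<^sup>2) * ellK q) + c * ellK q / ellD q"

lemma ellD_mult_has_real_derivative:
  assumes q: "0 < q" "q < 1"
  shows "((\<lambda>q. ellD q * (ellEc q - (1 - q\<^sup>2) * ellK q)) has_real_derivative
    (1 - 2 * q\<^sup>2) * ((ellEc q - (1 - q\<^sup>2) * ellK q)\<^sup>2 + q\<^sup>2 * (1 - q\<^sup>2) * (ellK q)\<^sup>2)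
      / (q * (1 - q\<^sup>2))) (at q)"
proof -
  define K E m where "K = ellK q" and "E = ellEc q" and "m = 1 - q\<^sup>2"
  have "m \<noteq> 0" using square_less_1[of q] q by (simp add: m_def)
  have "((\<lambda>q. ellD q * (ellEc q - (1 - q\<^sup>2) * ellK q)) has_real_derivative
      ((1 - 2 * q\<^sup>2) * E - m * K) / (q * m) * (E - m * K) + q * K * ellD q) (at q)"
    using DERIV_mult[OF ellD_has_real_derivative[OF q] ellEc_minus_comodulus_sq_ellK_has_real_derivative[OF q]]
    by (simp add: K_def E_def m_def)
  moreover have "((1 - 2 * q\<^sup>2) * E - m * K) * (E - m * K) + q\<^sup>2 * m * K * ellD q
      = (1 - 2 * q\<^sup>2) * ((E - m * K)\<^sup>2 + q\<^sup>2 * m * K\<^sup>2)"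
    unfolding m_def ellD_def K_def E_def by algebra
  then have "((1 - 2 * q\<^sup>2) * E - m * K) / (q * m) * (E - m * K) + q * K * ellD q
      = (1 - 2 * q\<^sup>2) * ((E - m * K)\<^sup>2 + q\<^sup>2 * m * K\<^sup>2) / (q * m)"
    using q \<open>m \<noteq> 0\<close> by (simp add: field_simps power2_eq_square)
  ultimately show ?thesis
    unfolding K_def E_def m_def by (rule DERIV_cong)
qed

lemma ellK_div_ellD_has_real_derivative:
  assumes q: "0 < q" "q < 1" and D: "ellD q \<noteq> 0"
  shows "((\<lambda>q. ellK q / ellD q) has_real_derivative
    2 * ((ellEc q - (1 - q\<^sup>2) * ellK q)\<^sup>2 + q\<^sup>2 * (1 - q\<^sup>2) * (ellK q)\<^sup>2)
      / (q * (1 - q\<^sup>2) * (ellD q)\<^sup>2)) (at q)"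
proof -
  define K E m where "K = ellK q" and "E = ellEc q" and "m = 1 - q\<^sup>2"
  have "m \<noteq> 0" using square_less_1[of q] q by (simp add: m_def)
  have "((\<lambda>q. ellK q / ellD q) has_real_derivative
      ((E - m * K) / (q * m) * ellD q - ((1 - 2 * q\<^sup>2) * E - m * K) / (q * m) * K) / (ellD q)\<^sup>2) (at q)"
    using DERIV_quotient[OF ellK_has_real_derivative[OF q] ellD_has_real_derivative[OF q] D]
    by (simp add: K_def E_def m_def power2_eq_square)
  moreover have "(E - m * K) / (q * m) * ellD q - ((1 - 2 * q\<^sup>2) * E - m * K) / (q * m) * K
      = ((E - m * K) * ellD q - ((1 - 2 * q\<^sup>2) * E - m * K) * K) / (q * m)"
    by (simp only: times_divide_eq_left flip: diff_divide_distrib)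
  also have "(E - m * K) * ellD q - ((1 - 2 * q\<^sup>2) * E - m * K) * K
      = 2 * ((E - m * K)\<^sup>2 + q\<^sup>2 * m * K\<^sup>2)"
    unfolding m_def ellD_def K_def E_def by algebra
  ultimately show ?thesis
    unfolding K_def E_def m_def by (elim DERIV_cong) simp
qed

lemma reduced_energy_has_real_derivative:
  assumes q: "0 < q" "q < 1" and D: "ellD q \<noteq> 0"
  shows "(reduced_energy c has_real_derivative
    2 * ((ellEc q - (1 - q\<^sup>2) * ellK q)\<^sup>2 + q\<^sup>2 * (1 - q\<^sup>2) * (ellK q)\<^sup>2) * (c - g_aux q)
      / (q * (1 - q\<^sup>2) * (ellD q)\<^sup>2)) (at q)"
proof -
  define B m where "B = (ellEc q - (1 - q\<^sup>2) * ellK q)\<^sup>2 + q\<^sup>2 * (1 - q\<^sup>2) * (ellK q)\<^sup>2"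
    and "m = 1 - q\<^sup>2"
  have "m \<noteq> 0" using square_less_1[of q] q by (simp add: m_def)
  have "reduced_energy c
      = (\<lambda>q. 16 * (ellD q * (ellEc q - (1 - q\<^sup>2) * ellK q)) + c * (ellK q / ellD q))"
    by (simp add: fun_eq_iff reduced_energy_def)
  then have "(reduced_energy c has_real_derivative
      16 * ((1 - 2 * q\<^sup>2) * B / (q * m)) + c * (2 * B / (q * m * (ellD q)\<^sup>2))) (at q)"
    unfolding B_def m_def
    by (simp only:) (intro DERIV_add DERIV_cmult ellD_mult_has_real_derivative
        ellK_div_ellD_has_real_derivative q D)
  moreover have "16 * ((1 - 2 * q\<^sup>2) * B / (q * m)) + c * (2 * B / (q * m * (ellD q)\<^sup>2))
      = 2 * B * (c - g_aux q) / (q * m * (ellD q)\<^sup>2)"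
    using q \<open>m \<noteq> 0\<close> D unfolding g_aux_def ellD_def[symmetric] by (simp add: field_simps)
  ultimately show ?thesis
    unfolding B_def m_def by (rule DERIV_cong)
qed

lemma strict_antimono_on_reduced_energy:
  assumes "0 < a" "b < q_star" and "\<And>x. a < x \<Longrightarrow> x < b \<Longrightarrow> c < g_aux x"
  shows "strict_antimono_on {a..b} (reduced_energy c)"
proof (rule strict_antimono_on_if_deriv_neg)
  fix x assume "x \<in> {a..b}"
  then have x: "0 < x" "x < q_star" using assms by auto
  then have "x < 1" using q_star_less_1 by simp
  then have "ellD x \<noteq> 0" using x ellD_pos_iff[of x] by simp
  with x \<open>x < 1\<close> show "(reduced_energy c has_real_derivative
    2 * ((ellEc x - (1 - x\<^sup>2) * ellK x)\<^sup>2 + x\<^sup>2 * (1 - x\<^sup>2) * (ellK x)\<^sup>2) * (c - g_aux x)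
      / (x * (1 - x\<^sup>2) * (ellD x)\<^sup>2)) (at x)"
    by (intro reduced_energy_has_real_derivative)
next
  fix x assume "x \<in> interior {a..b}"
  then have x: "0 < x" "x < 1" "c < g_aux x" "ellD x \<noteq> 0"
    using assms q_star_less_1 ellD_pos_iff[of x] by auto
  then have "0 < x\<^sup>2 * (1 - x\<^sup>2) * (ellK x)\<^sup>2" "0 < x * (1 - x\<^sup>2) * (ellD x)\<^sup>2"
    using square_less_1[of x] ellK_pos[of x] by auto
  then have "0 < (ellEc x - (1 - x\<^sup>2) * ellK x)\<^sup>2 + x\<^sup>2 * (1 - x\<^sup>2) * (ellK x)\<^sup>2"
    by (simp add: add_nonneg_pos)
  with x \<open>0 < x * (1 - x\<^sup>2) * (ellD x)\<^sup>2\<close>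
  show "2 * ((ellEc x - (1 - x\<^sup>2) * ellK x)\<^sup>2 + x\<^sup>2 * (1 - x\<^sup>2) * (ellK x)\<^sup>2) * (c - g_aux x)
      / (x * (1 - x\<^sup>2) * (ellD x)\<^sup>2) < 0"
    by (intro divide_neg_pos mult_pos_neg) auto
qed simp

lemma g_aux_gt_between_q1_q2:
  assumes c: "0 < c" "c \<le> lambda_hat" and x: "q1 c < x" "x < q2 c"
  shows "c < g_aux x"
proof (cases "x \<le> q_hat")
  case True
  then show ?thesis
    using strict_mono_onD[OF strict_mono_on_g_aux, of "q1 c" x] q1[OF c] x by simp
next
  case False
  then show ?thesis
    using monotone_onD[OF strict_antimono_on_g_aux, of x "q2 c"] q2[OF c] x by simp
qed

lemma q1_q2_eq_q_hat_iff:
  assumes c: "0 < c" "c \<le> lambda_hat"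
  shows "q1 c = q_hat \<longleftrightarrow> c = lambda_hat" and "q2 c = q_hat \<longleftrightarrow> c = lambda_hat"
proof -
  have "q1 c = q_hat" if "c = lambda_hat"
    using strict_mono_on_imp_inj_on[OF strict_mono_on_g_aux] q1[OF c] q_hat_gt that
    by (auto simp: lambda_hat_def dest: inj_onD)
  then show "q1 c = q_hat \<longleftrightarrow> c = lambda_hat"
    using g_aux_q1[OF c] by (auto simp: lambda_hat_def)
  have "inj_on g_aux {q_hat..q_star}"
    using strict_antimono_on_g_aux strict_antimono_iff_antimono by blast
  then have "q2 c = q_hat" if "c = lambda_hat"
    using q2[OF c] q_hat_less_q_star that by (auto simp: lambda_hat_def dest: inj_onD)
  then show "q2 c = q_hat \<longleftrightarrow> c = lambda_hat"
    using g_aux_q2[OF c] by (auto simp: lambda_hat_def)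
qed

lemma reduced_energy_q2_le_q1:
  assumes c: "0 < c" "c \<le> lambda_hat"
  shows "reduced_energy c (q2 c) \<le> reduced_energy c (q1 c)"
    and "reduced_energy c (q2 c) = reduced_energy c (q1 c) \<longleftrightarrow> c = lambda_hat"
proof -
  have "reduced_energy c (q2 c) < reduced_energy c (q1 c)" if "c \<noteq> lambda_hat"
  proof -
    have "q1 c \<noteq> q_hat"
      using q1_q2_eq_q_hat_iff(1)[OF c] that by simp
    then have "q1 c < q2 c"
      using q1_le_q_hat[OF c] q_hat_le_q2[OF c] by linarith
    moreover have "0 < q1 c"
      using q1_gt[OF c] pos_if_inverse_sqrt2_le[of "q1 c"] by simp
    ultimately show ?thesis
      using strict_antimono_on_reduced_energy[OF _ q2_less_q_star[OF c] g_aux_gt_between_q1_q2[OF c]]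
      by (auto simp: monotone_on_def)
  qed
  moreover have "q1 c = q2 c" if "c = lambda_hat"
    using q1_q2_eq_q_hat_iff[OF c] that by simp
  ultimately show "reduced_energy c (q2 c) \<le> reduced_energy c (q1 c)"
    and "reduced_energy c (q2 c) = reduced_energy c (q1 c) \<longleftrightarrow> c = lambda_hat"
    by (cases "c = lambda_hat"; simp add: less_imp_le less_imp_neq)+
qed

section \<open>Energy of the arc curves\<close>

definition arc_amplitude :: "real \<Rightarrow> real \<Rightarrow> real \<Rightarrow> real \<Rightarrow> real" where
  "arc_amplitude q a k s = am (a * s - k) q"

lemma arc_amplitude_has_real_derivative:
  assumes "q\<^sup>2 < 1"
  shows "(arc_amplitude q a k has_real_derivative a * ell_delta q (arc_amplitude q a k s)) (at s)"
proof -
  have "((\<lambda>s. a * s - k) has_real_derivative a) (at s)"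
    by (auto intro!: derivative_eq_intros)
  from DERIV_chain2[OF am_has_real_derivative[OF assms] this] show ?thesis
    by (simp add: arc_amplitude_def[abs_def] mult.commute)
qed

context
  fixes q a k :: real and \<psi> :: "real \<Rightarrow> real"
  assumes q: "q\<^sup>2 < 1"
  defines "\<psi> \<equiv> arc_amplitude q a k"
begin

lemma arc_x_has_real_derivative:
  assumes "a \<noteq> 0"
  shows "((\<lambda>s. (2 * ellE (\<psi> s) q + C - a * s) / a) has_real_derivative
    1 - 2 * q\<^sup>2 * (sin (\<psi> s))\<^sup>2) (at s)"
proof -
  have "((\<lambda>s. (2 * ellE (\<psi> s) q + C - a * s) / a) has_real_derivative
      (2 * (ell_delta q (\<psi> s) * (a * ell_delta q (\<psi> s))) + 0 - a) / a) (at s)"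
    unfolding \<psi>_def
    by (intro DERIV_cdivide DERIV_diff DERIV_add DERIV_cmult DERIV_const DERIV_cmult_Id
        DERIV_chain2[OF ellE_has_real_derivative arc_amplitude_has_real_derivative[OF q]])
  moreover have "(2 * (ell_delta q (\<psi> s) * (a * ell_delta q (\<psi> s))) + 0 - a) / a
      = 2 * (ell_delta q (\<psi> s))\<^sup>2 - 1"
    using assms by (simp add: field_simps power2_eq_square)
  also have "\<dots> = 1 - 2 * q\<^sup>2 * (sin (\<psi> s))\<^sup>2"
    by (simp add: ell_delta_squared[OF q])
  ultimately show ?thesis
    by (rule DERIV_cong)
qed

lemma arc_x'_has_real_derivative:
  "((\<lambda>s. 1 - 2 * q\<^sup>2 * (sin (\<psi> s))\<^sup>2) has_real_derivative
    - (4 * q\<^sup>2 * a * sin (\<psi> s) * cos (\<psi> s) * ell_delta q (\<psi> s))) (at s)"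
proof -
  have "((\<lambda>s. 1 - 2 * q\<^sup>2 * (sin (\<psi> s))\<^sup>2) has_real_derivative
      0 - 2 * q\<^sup>2 * (2 * sin (\<psi> s) ^ 1 * (cos (\<psi> s) * (a * ell_delta q (\<psi> s))))) (at s)"
    unfolding \<psi>_def
    by (intro DERIV_diff DERIV_const DERIV_cmult
        DERIV_chain2[OF _ DERIV_chain2[OF DERIV_sin arc_amplitude_has_real_derivative[OF q]],
          where f="\<lambda>x. x\<^sup>2"])
       (auto intro!: derivative_eq_intros)
  then show ?thesis
    by (simp add: algebra_simps)
qed

lemma arc_y_has_real_derivative:
  assumes "a \<noteq> 0"
  shows "((\<lambda>s. 2 * q * cos (\<psi> s) / a) has_real_derivative
    - (2 * q * sin (\<psi> s) * ell_delta q (\<psi> s))) (at s)"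
proof -
  have "((\<lambda>s. 2 * q * cos (\<psi> s) / a) has_real_derivative
      2 * q * (- sin (\<psi> s) * (a * ell_delta q (\<psi> s))) / a) (at s)"
    unfolding \<psi>_def
    by (intro DERIV_cdivide DERIV_cmult DERIV_chain2[OF DERIV_cos arc_amplitude_has_real_derivative[OF q]])
  then show ?thesis
    using assms by (simp add: field_simps)
qed

lemma arc_y'_has_real_derivative:
  "((\<lambda>s. - (2 * q * sin (\<psi> s) * ell_delta q (\<psi> s))) has_real_derivative
    - (2 * q * a * cos (\<psi> s) * (1 - 2 * q\<^sup>2 * (sin (\<psi> s))\<^sup>2))) (at s)"
proof -
  define S C \<Delta> where "S = sin (\<psi> s)" and "C = cos (\<psi> s)" and "\<Delta> = ell_delta q (\<psi> s)"
  have "((\<lambda>s. - (2 * q * sin (\<psi> s) * ell_delta q (\<psi> s))) has_real_derivative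
      - (2 * q * (C * (a * \<Delta>)) * \<Delta> + - (q\<^sup>2 * S * C) / \<Delta> * (a * \<Delta>) * (2 * q * S))) (at s)"
    unfolding S_def C_def \<Delta>_def \<psi>_def
    by (intro DERIV_minus DERIV_mult DERIV_cmult
        DERIV_chain2[OF DERIV_sin arc_amplitude_has_real_derivative[OF q]]
        DERIV_chain2[OF ell_delta_has_derivative_arg[OF q] arc_amplitude_has_real_derivative[OF q]])
  moreover have "- (2 * q * (C * (a * \<Delta>)) * \<Delta> + - (q\<^sup>2 * S * C) / \<Delta> * (a * \<Delta>) * (2 * q * S))
      = - (2 * q * a * C * (\<Delta>\<^sup>2 - q\<^sup>2 * S\<^sup>2))"
    using ell_delta_nonzero[OF q] by (simp add: \<Delta>_def field_simps power2_eq_square)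
  also have "\<dots> = - (2 * q * a * C * (1 - 2 * q\<^sup>2 * S\<^sup>2))"
    by (simp add: \<Delta>_def S_def ell_delta_squared[OF q])
  ultimately show ?thesis
    unfolding S_def C_def by (rule DERIV_cong)
qed

lemma arc_bending_antiderivative:
  "((\<lambda>s. 4 * a * (ellE (\<psi> s) q - (1 - q\<^sup>2) * (a * s - k))) has_real_derivative
    4 * a\<^sup>2 * q\<^sup>2 * (cos (\<psi> s))\<^sup>2) (at s)"
proof -
  define \<Delta> where "\<Delta> = ell_delta q (\<psi> s)"
  have "((\<lambda>s. 4 * a * (ellE (\<psi> s) q - (1 - q\<^sup>2) * (a * s - k))) has_real_derivative
      4 * a * (\<Delta> * (a * \<Delta>) - (1 - q\<^sup>2) * (a - 0))) (at s)"
    unfolding \<Delta>_def \<psi>_def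
    by (intro DERIV_cmult DERIV_diff DERIV_cmult_Id DERIV_const
        DERIV_chain2[OF ellE_has_real_derivative arc_amplitude_has_real_derivative[OF q]])
  moreover have "4 * a * (\<Delta> * (a * \<Delta>) - (1 - q\<^sup>2) * (a - 0)) = 4 * a\<^sup>2 * (\<Delta>\<^sup>2 - (1 - q\<^sup>2))"
    by (simp add: power2_eq_square algebra_simps)
  also have "\<dots> = 4 * a\<^sup>2 * q\<^sup>2 * (cos (\<psi> s))\<^sup>2"
    by (simp add: \<Delta>_def ell_delta_squared[OF q] cos_squared_eq algebra_simps)
  ultimately show ?thesis
    by (rule DERIV_cong)
qed

end

lemma arc_curve_eq:
  "arc_curve l n q = (\<lambda>s. ((2 * ellE (arc_amplitude q (alpha_of l n q) (ellK q) s) q + 2 * ellEc q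
      - alpha_of l n q * s) / alpha_of l n q,
    2 * q * cos (arc_amplitude q (alpha_of l n q) (ellK q) s) / alpha_of l n q))"
  by (simp add: arc_curve_def arc_amplitude_def cn_def Let_def fun_eq_iff)

lemma
  assumes q: "q\<^sup>2 < 1" and \<alpha>: "alpha_of l n q \<noteq> 0"
  shows speed_arc_curve: "speed (arc_curve l n q) t = 1"
    and signed_curvature_arc_curve: "signed_curvature (arc_curve l n q) t
      = - (2 * q * alpha_of l n q * cos (arc_amplitude q (alpha_of l n q) (ellK q) t))"
proof -
  define \<psi> where "\<psi> = arc_amplitude q (alpha_of l n q) (ellK q)"
  define S C \<Delta> where "S = sin (\<psi> t)" and "C = cos (\<psi> t)" and "\<Delta> = ell_delta q (\<psi> t)"
  have dX: "deriv (\<lambda>u. fst (arc_curve l n q u)) = (\<lambda>s. 1 - 2 * q\<^sup>2 * (sin (\<psi> s))\<^sup>2)"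
    unfolding arc_curve_eq \<psi>_def fst_conv
    by (intro ext DERIV_imp_deriv arc_x_has_real_derivative q \<alpha>)
  have dY: "deriv (\<lambda>u. snd (arc_curve l n q u)) = (\<lambda>s. - (2 * q * sin (\<psi> s) * ell_delta q (\<psi> s)))"
    unfolding arc_curve_eq \<psi>_def snd_conv
    by (intro ext DERIV_imp_deriv arc_y_has_real_derivative q \<alpha>)
  have ddX: "deriv (deriv (\<lambda>u. fst (arc_curve l n q u))) t = - (4 * q\<^sup>2 * alpha_of l n q * S * C * \<Delta>)"
    unfolding dX S_def C_def \<Delta>_def \<psi>_def
    by (intro DERIV_imp_deriv arc_x'_has_real_derivative q)
  have ddY: "deriv (deriv (\<lambda>u. snd (arc_curve l n q u))) t
      = - (2 * q * alpha_of l n q * C * (1 - 2 * q\<^sup>2 * S\<^sup>2))"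
    unfolding dY S_def C_def \<psi>_def
    by (intro DERIV_imp_deriv arc_y'_has_real_derivative q)
  have \<Delta>2: "\<Delta>\<^sup>2 = 1 - q\<^sup>2 * S\<^sup>2"
    unfolding \<Delta>_def S_def by (rule ell_delta_squared[OF q])
  have unit: "(1 - 2 * q\<^sup>2 * S\<^sup>2)\<^sup>2 + (2 * q * S * \<Delta>)\<^sup>2 = 1"
    unfolding power_mult_distrib \<Delta>2 by (simp add: algebra_simps power2_eq_square)
  then show speed: "speed (arc_curve l n q) t = 1"
    unfolding speed_def dX dY S_def \<Delta>_def by simp
  have "(1 - 2 * q\<^sup>2 * S\<^sup>2) * - (2 * q * alpha_of l n q * C * (1 - 2 * q\<^sup>2 * S\<^sup>2))
      - - (2 * q * S * \<Delta>) * - (4 * q\<^sup>2 * alpha_of l n q * S * C * \<Delta>)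
      = - (2 * q * alpha_of l n q * C) * ((1 - 2 * q\<^sup>2 * S\<^sup>2)\<^sup>2 + (2 * q * S * \<Delta>)\<^sup>2)"
    by (simp add: power2_eq_square algebra_simps)
  then show "signed_curvature (arc_curve l n q) t
      = - (2 * q * alpha_of l n q * cos (arc_amplitude q (alpha_of l n q) (ellK q) t))"
    unfolding signed_curvature_def speed ddX ddY unit
    by (simp add: dX dY S_def C_def \<Delta>_def \<psi>_def)
qed

lemma bending_energy_arc_curve:
  assumes q: "q\<^sup>2 < 1" and \<alpha>: "0 < alpha_of l n q"
  shows "((\<lambda>t. (signed_curvature (arc_curve l n q) t)\<^sup>2 * speed (arc_curve l n q) t) has_integral
    8 * real n * alpha_of l n q * (ellEc q - (1 - q\<^sup>2) * ellK q)) {0..arc_end l n q}"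
proof -
  define \<alpha> K L where "\<alpha> = alpha_of l n q" and "K = ellK q" and "L = arc_end l n q"
  define \<psi> where "\<psi> = arc_amplitude q \<alpha> K"
  define G where "G s = 4 * \<alpha> * (ellE (\<psi> s) q - (1 - q\<^sup>2) * (\<alpha> * s - K))" for s
  have L: "L = 2 * real n * K / \<alpha>" by (simp add: L_def arc_end_def \<alpha>_def K_def)
  then have "0 \<le> L" using \<alpha> ellK_pos[OF q] by (simp add: \<alpha>_def K_def)
  have "\<alpha> * L - K = (2 * real n - 1) * K" using L \<alpha> by (simp add: \<alpha>_def field_simps)
  then have \<psi>_L: "\<psi> L = - pi/2 + real n * pi" and \<psi>_0: "\<psi> 0 = - pi/2"
    using am_odd_multiple_ellK[OF q, of n] am_odd_multiple_ellK[OF q, of 0]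
    by (simp_all add: \<psi>_def arc_amplitude_def K_def)
  have "(\<lambda>t. (signed_curvature (arc_curve l n q) t)\<^sup>2 * speed (arc_curve l n q) t)
      = (\<lambda>t. 4 * \<alpha>\<^sup>2 * q\<^sup>2 * (cos (\<psi> t))\<^sup>2)"
    using \<alpha> q by (simp add: speed_arc_curve signed_curvature_arc_curve \<alpha>_def K_def \<psi>_def
        power_mult_distrib mult.commute mult.left_commute)
  then have "((\<lambda>t. (signed_curvature (arc_curve l n q) t)\<^sup>2 * speed (arc_curve l n q) t)
      has_integral (G L - G 0)) {0..L}"
    unfolding G_def \<psi>_def using \<open>0 \<le> L\<close>
    by (simp only:) (intro has_integral_of_real_derivative arc_bending_antiderivative q)
  moreover have "G L - G 0 = 8 * real n * \<alpha> * (ellEc q - (1 - q\<^sup>2) * K)"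
  proof -
    have "ellE (- pi/2) q = - ellEc q"
      using ellE_odd_half_pi[of 0 q] by simp
    then show ?thesis
      unfolding G_def \<psi>_L \<psi>_0 \<open>\<alpha> * L - K = _\<close> ellE_odd_half_pi by (simp add: algebra_simps)
  qed
  ultimately show ?thesis
    by (simp add: \<alpha>_def K_def L_def)
qed

lemma energy_arc_curve:
  assumes q: "0 < q" "q < q_star" and l: "0 < l" and n: "1 \<le> n"
  shows "energy lam (arc_curve l n q) 0 (arc_end l n q)
    = (real n)\<^sup>2 / l * reduced_energy (lam * l\<^sup>2 / (real n)\<^sup>2) q"
proof -
  have "q < 1" using q q_star_less_1 by simp
  then have q2: "q\<^sup>2 < 1" using square_less_1 q by simp
  have D: "0 < ellD q" using ellD_pos_iff q \<open>q < 1\<close> by simp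
  have \<alpha>: "alpha_of l n q = 2 * real n / l * ellD q" by (simp add: alpha_of_def ellD_def)
  then have "0 < alpha_of l n q" using l n D by simp
  have L: "arc_end l n q = l * ellK q / ellD q"
    using l n D by (simp add: arc_end_def \<alpha>)
  then have "0 \<le> arc_end l n q"
    using l D ellK_pos[OF q2] by simp
  moreover have "speed (arc_curve l n q) = (\<lambda>_. 1)"
    using \<open>0 < alpha_of l n q\<close> q2 by (simp add: fun_eq_iff speed_arc_curve)
  ultimately have "curve_length (arc_curve l n q) 0 (arc_end l n q) = arc_end l n q"
    by (simp add: curve_length_def)
  then have "energy lam (arc_curve l n q) 0 (arc_end l n q)
      = 8 * real n * alpha_of l n q * (ellEc q - (1 - q\<^sup>2) * ellK q) + lam * arc_end l n q"
    unfolding energy_def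
    using integral_unique[OF bending_energy_arc_curve[OF q2 \<open>0 < alpha_of l n q\<close>]] by simp
  also have "\<dots> = (real n)\<^sup>2 / l * reduced_energy (lam * l\<^sup>2 / (real n)\<^sup>2) q"
    unfolding reduced_energy_def L \<alpha> using l n D by (simp add: field_simps power2_eq_square)
  finally show ?thesis .
qed

lemma n_lam_eq:
  assumes "lam * l\<^sup>2 = (real m)\<^sup>2 * lambda_hat"
  shows "n_lam lam l = int m"
  using lambda_hat_pos by (simp add: n_lam_def assms)

lemma
  assumes "0 < lam" "0 < l" "n_lam lam l \<le> int n"
  shows pos_if_n_lam_le: "0 < n"
    and scaled_le_lambda_hat_if_n_lam_le: "lam * l\<^sup>2 / (real n)\<^sup>2 \<le> lambda_hat"
proof -
  have "sqrt (lam * l\<^sup>2 / lambda_hat) \<le> real n"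
    using le_of_int_ceiling[of "sqrt (lam * l\<^sup>2 / lambda_hat)"] assms(3)
    unfolding n_lam_def by linarith
  moreover have "0 < sqrt (lam * l\<^sup>2 / lambda_hat)"
    using assms lambda_hat_pos by simp
  ultimately have "0 < real n"
    by linarith
  then show "0 < n" by simp
  from \<open>sqrt _ \<le> real n\<close> have "lam * l\<^sup>2 / lambda_hat \<le> (real n)\<^sup>2"
    by (rule sqrt_le_D)
  then show "lam * l\<^sup>2 / (real n)\<^sup>2 \<le> lambda_hat"
    using lambda_hat_pos \<open>0 < n\<close> by (simp add: field_simps)
qed

lemma scaled_eq_lambda_hat_iff:
  assumes "0 < n"
  shows "lam * l\<^sup>2 / (real n)\<^sup>2 = lambda_hat
    \<longleftrightarrow> (\<exists>m::nat. lam * l\<^sup>2 = (real m)\<^sup>2 * lambda_hat \<and> int n = n_lam lam l)"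
proof
  assume "lam * l\<^sup>2 / (real n)\<^sup>2 = lambda_hat"
  then have "lam * l\<^sup>2 = (real n)\<^sup>2 * lambda_hat"
    using assms by (simp add: field_simps)
  then show "\<exists>m::nat. lam * l\<^sup>2 = (real m)\<^sup>2 * lambda_hat \<and> int n = n_lam lam l"
    using n_lam_eq[of lam l n] by auto
next
  assume "\<exists>m::nat. lam * l\<^sup>2 = (real m)\<^sup>2 * lambda_hat \<and> int n = n_lam lam l"
  then obtain m where m: "lam * l\<^sup>2 = (real m)\<^sup>2 * lambda_hat" "int n = n_lam lam l"
    by blast
  then have "m = n"
    using n_lam_eq[OF m(1)] by simp
  then show "lam * l\<^sup>2 / (real n)\<^sup>2 = lambda_hat"
    using m(1) assms by simp
qed

lemma
  assumes c: "0 < c" "c \<le> lambda_hat" and c_eq: "c = lam * l\<^sup>2 / (real n)\<^sup>2"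
    and "0 < l" "0 < n"
  shows energy_gamma_sarc: "energy lam (gamma_sarc lam l n) 0 (sarc_end lam l n)
      = (real n)\<^sup>2 / l * reduced_energy c (q1 c)"
    and energy_gamma_larc: "energy lam (gamma_larc lam l n) 0 (larc_end lam l n)
      = (real n)\<^sup>2 / l * reduced_energy c (q2 c)"
proof -
  have "0 < q1 c" "q1 c < q_star" "0 < q2 c" "q2 c < q_star"
    using q1_gt[OF c] q1_le_q_hat[OF c] q_hat_le_q2[OF c] q2_less_q_star[OF c] q_hat_gt q_hat_less_q_star
      pos_if_inverse_sqrt2_le[of "q1 c"] pos_if_inverse_sqrt2_le[of q_hat] by linarith+
  then show "energy lam (gamma_sarc lam l n) 0 (sarc_end lam l n) = (real n)\<^sup>2 / l * reduced_energy c (q1 c)"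
    and "energy lam (gamma_larc lam l n) 0 (larc_end lam l n) = (real n)\<^sup>2 / l * reduced_energy c (q2 c)"
    unfolding gamma_larc_def larc_end_def gamma_sarc_def sarc_end_def c_eq[symmetric]
    using energy_arc_curve[OF _ _ \<open>0 < l\<close>, of _ n lam] \<open>0 < n\<close> by (simp_all add: c_eq)
qed

theorem lemma4p5:
  fixes lam l :: real and n :: nat
  assumes "lam > 0" and "l > 0" and "int n \<ge> n_lam lam l"
  shows "energy lam (gamma_larc lam l n) 0 (larc_end lam l n)
           \<le> energy lam (gamma_sarc lam l n) 0 (sarc_end lam l n)
    \<and> (energy lam (gamma_larc lam l n) 0 (larc_end lam l n)
           = energy lam (gamma_sarc lam l n) 0 (sarc_end lam l n)
       \<longleftrightarrow> (\<exists>m::nat. lam * l\<^sup>2 = (real m)\<^sup>2 * lambda_hat \<and> int n = n_lam lam l))"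
proof -
  define c where "c = lam * l\<^sup>2 / (real n)\<^sup>2"
  have n: "0 < n" and c: "0 < c" "c \<le> lambda_hat"
    using pos_if_n_lam_le[OF assms] scaled_le_lambda_hat_if_n_lam_le[OF assms] assms
    by (simp_all add: c_def)
  note energies = energy_gamma_sarc[OF c c_def \<open>0 < l\<close> n] energy_gamma_larc[OF c c_def \<open>0 < l\<close> n]
  have "0 < (real n)\<^sup>2 / l"
    using n assms by simp
  then have "(real n)\<^sup>2 / l * reduced_energy c (q2 c) \<le> (real n)\<^sup>2 / l * reduced_energy c (q1 c)"
    by (intro mult_left_mono[OF reduced_energy_q2_le_q1(1)[OF c]]) simp
  moreover have "(real n)\<^sup>2 / l * reduced_energy c (q2 c) = (real n)\<^sup>2 / l * reduced_energy c (q1 c)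
      \<longleftrightarrow> c = lambda_hat"
    using reduced_energy_q2_le_q1(2)[OF c] n \<open>0 < l\<close> by simp
  moreover have "c = lambda_hat \<longleftrightarrow> (\<exists>m::nat. lam * l\<^sup>2 = (real m)\<^sup>2 * lambda_hat \<and> int n = n_lam lam l)"
    unfolding c_def by (rule scaled_eq_lambda_hat_iff[OF n])
  ultimately show ?thesis
    unfolding energies by (simp only:)
qed

end
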